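(* Let $f\colon\mathbb R\times\mathbb R\times\mathbb Z^3\to\mathbb C$, $a\in\mathbb Z^3$, $T\ge1$, let $J\subseteq[0,T]$ be an interval, and let $A,N\ge1$ with $|a|\lesssim A\ll N$. Assume that for all $|t|,|t'|\le T$ and $n\in\mathbb Z^3$: $|f(t,t',n)|\le A\langle n\rangle^{-3}$, $|f(t,t',n)-f(t,t',-n)|\le A\langle n\rangle^{-4}$, and $|\partial_{t'}f(t,t',n)|\le A\langle n\rangle^{-4}$. Then $$\sup_{\lambda\in\mathbb R}\sup_{|t|\le T}\Big|\sum_{n\in\mathbb Z^3}\chi_N(n)\int_0^t1_J(t')\sin((t-t')\langle a+n\rangle)\cos((t-t')\langle n\rangle)e^{i\lambda t'}f(t,t',n)\,dt'\Big|\lesssim T^2A^3\log(2+N)N^{-1}.$$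
   Context: $\langle n\rangle=(1+|n|^2)^{1/2}$. $N$ is dyadic and $\chi_N\colon\mathbb Z^3\to[0,1]$ is the Littlewood–Paley symbol ($\chi_1=\rho_1$, $\chi_N=\rho_N-\rho_{N/2}$ for a fixed smooth radial-type truncation $\rho_N$ to $|n|\lesssim N$), supported on $|n|\sim N$. "$|a|\lesssim A\ll N$" means $|a|\le CA$ for an absolute constant $C$ and $N\ge C'A$ for a sufficiently large absolute constant $C'$. Implicit constants are absolute. *)

theory Defs
  imports "HOL-Analysis.Analysis"
begin

type_synonym z3 = "int \<times> int \<times> int"

definition z3norm :: "z3 \<Rightarrow> real" where
  "z3norm n = (case n of (x,y,z) \<Rightarrow> sqrt (real_of_int x ^ 2 + real_of_int y ^ 2 + real_of_int z ^ 2))"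

definition jbr :: "z3 \<Rightarrow> real" where
  "jbr n = sqrt (1 + (z3norm n) ^ 2)"

definition z3add :: "z3 \<Rightarrow> z3 \<Rightarrow> z3" where
  "z3add m n = (case m of (a,b,c) \<Rightarrow> case n of (x,y,z) \<Rightarrow> (a+x, b+y, c+z))"

definition z3neg :: "z3 \<Rightarrow> z3" where
  "z3neg n = (case n of (x,y,z) \<Rightarrow> (-x, -y, -z))"

definition trunc_profile :: "(real \<Rightarrow> real) \<Rightarrow> bool" where
  "trunc_profile \<rho> \<longleftrightarrow>
     (\<forall>k x. ((deriv ^^ k) \<rho>) differentiable (at x)) \<and>
     (\<forall>r. 0 \<le> \<rho> r \<and> \<rho> r \<le> 1) \<and>
     (\<forall>r. \<bar>r\<bar> \<le> 1 \<longrightarrow> \<rho> r = 1) \<and>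
     (\<forall>r. \<bar>r\<bar> \<ge> 2 \<longrightarrow> \<rho> r = 0) \<and>
     (\<forall>r s. 0 \<le> r \<longrightarrow> r \<le> s \<longrightarrow> \<rho> s \<le> \<rho> r)"

definition rhoN :: "(real \<Rightarrow> real) \<Rightarrow> real \<Rightarrow> z3 \<Rightarrow> real" where
  "rhoN \<rho> N n = \<rho> (z3norm n / N)"

definition chiLP :: "(real \<Rightarrow> real) \<Rightarrow> nat \<Rightarrow> z3 \<Rightarrow> real" where
  "chiLP \<rho> k n = (if k = 0 then rhoN \<rho> 1 n
                   else rhoN \<rho> (2 ^ k) n - rhoN \<rho> (2 ^ (k - 1)) n)"

end

theory Submission
  imports Defs
begin

text \<open>Write \<open>sin \<alpha> cos \<beta> = (sin (\<alpha> + \<beta>) + sin (\<alpha> - \<beta>)) / 2\<close>. The part with the fast phase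
  \<open>\<langle>a + n\<rangle> + \<langle>n\<rangle>\<close> is an oscillatory integral: shifting by half a period shows
  \<open>\<bar>\<integral> cis (\<mu> x) g x dx\<bar> \<lesssim> T (sup \<bar>g\<bar> + Lip g) / (1 + \<bar>\<mu>\<bar>)\<close>, so the term for \<open>n\<close> is
  \<open>T A N\<^sup>-\<^sup>3\<close> times the resonance weight \<open>1 / (1 + \<bar>\<lambda> \<mp> (\<langle>a + n\<rangle> + \<langle>n\<rangle>)\<bar>)\<close>.
  Up to a coordinate symmetry, \<open>n\<close> lies in the cone where its last coordinate dominates, and
  there the phase increases at rate at least \<open>1/2\<close> along that coordinate; hence the weights
  along one line add up to \<open>O(log N)\<close>, and over the shell \<open>\<bar>n\<bar> \<sim> N\<close> to \<open>O(N\<^sup>2 log N)\<close>.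
  The slow phase \<open>\<langle>a + n\<rangle> - \<langle>n\<rangle>\<close> does not oscillate; instead one pairs \<open>n\<close> with \<open>-n\<close>.
  The two phases then add up to the second difference \<open>\<langle>a + n\<rangle> + \<langle>a - n\<rangle> - 2\<langle>n\<rangle> \<le> \<bar>a\<bar>\<^sup>2 / \<langle>n\<rangle>\<close>,
  so \<open>\<bar>sin x + sin y\<bar> \<le> \<bar>x + y\<bar>\<close> and the bound on \<open>f(n) - f(-n)\<close> give \<open>O(T\<^sup>2 A\<^sup>3 N\<^sup>-\<^sup>4)\<close>
  per pair, summed over \<open>O(N\<^sup>3)\<close> lattice points.\<close>

section \<open>Oscillatory integrals\<close>

text \<open>Shifting \<open>x\<close> by half a period \<open>h = \<pi>/\<bar>\<mu>\<bar>\<close> flips the sign of \<open>cis (\<mu> x)\<close>; averaging the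
  two representations of the integral leaves two end pieces of length \<open>h\<close> and the variation
  of \<open>g\<close> under the shift.\<close>

lemma integral_cis_half_period_shift:
  fixes g :: "real \<Rightarrow> complex"
  assumes cont: "continuous_on {c..d} g" and h: "h = pi / \<bar>\<mu>\<bar>" and mu: "\<mu> \<noteq> 0" and chd: "c + h \<le> d"
  shows "2 * integral {c..d} (\<lambda>x. cis (\<mu> * x) * g x)
    = integral {c..c+h} (\<lambda>x. cis (\<mu> * x) * g x) + integral {d-h..d} (\<lambda>x. cis (\<mu> * x) * g x)
      + integral {c..d-h} (\<lambda>x. cis (\<mu> * x) * (g x - g (x + h)))"
proof -
  define F where "F = (\<lambda>x. cis (\<mu> * x) * g x)"
  have h0: "0 < h" using mu by (simp add: h)
  have shift: "cis (\<mu> * (x + h)) = - cis (\<mu> * x)" for x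
  proof -
    have "\<mu> * h = pi \<or> \<mu> * h = - pi" using mu by (auto simp: h abs_if)
    then have "cis (\<mu> * h) = -1" by (auto simp: cis.ctr complex_eq_iff)
    then show ?thesis by (simp add: distrib_left cis_mult[symmetric])
  qed
  have Fint: "F integrable_on {c..d}"
    unfolding F_def by (intro integrable_continuous_interval continuous_intros cont)
  have gc: "continuous_on {c..d-h} g" "continuous_on {c..d-h} (\<lambda>x. g (x + h))"
    using h0 by (auto intro!: continuous_on_subset[OF cont] continuous_on_compose2[OF cont] continuous_intros)
  have left: "integral {c..d} F = integral {c..d-h} F + integral {d-h..d} F"
    using Henstock_Kurzweil_Integration.integral_combine[of c "d-h" d F] Fint chd h0 by auto
  have "integral {c..d} F = integral {c..c+h} F + integral {c+h..d} F"
    using Henstock_Kurzweil_Integration.integral_combine[of c "c+h" d F] Fint chd h0 by auto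
  also have "integral {c+h..d} F = integral {c..d-h} (F \<circ> (+) h)"
    using integral_shift_Icc_real[of c "d-h" F h] by (simp add: add.commute)
  also have "F \<circ> (+) h = (\<lambda>x. - (cis (\<mu> * x) * g (x + h)))"
    using shift by (auto simp: F_def add.commute[of h])
  finally have right: "integral {c..d} F
      = integral {c..c+h} F - integral {c..d-h} (\<lambda>x. cis (\<mu> * x) * g (x + h))"
    by (simp add: integral_neg)
  have "integral {c..d-h} F - integral {c..d-h} (\<lambda>x. cis (\<mu> * x) * g (x + h))
      = integral {c..d-h} (\<lambda>x. cis (\<mu> * x) * (g x - g (x + h)))"
    unfolding F_def
    by (subst integral_diff[symmetric])
      (auto simp: algebra_simps intro!: integrable_continuous_interval continuous_intros gc)
  then show ?thesis using left right unfolding F_def by (simp add: algebra_simps)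
qed

lemma oscillatory_integral_le:
  fixes g :: "real \<Rightarrow> complex"
  assumes cd: "c \<le> d" and bound: "\<And>x. x \<in> {c..d} \<Longrightarrow> norm (g x) \<le> M"
    and lip: "L-lipschitz_on {c..d} g" and mu: "\<mu> \<noteq> 0"
  shows "norm (integral {c..d} (\<lambda>x. cis (\<mu> * x) * g x)) \<le> (M + (d - c) * L / 2) * (pi / \<bar>\<mu>\<bar>)"
proof -
  define h where "h = pi / \<bar>\<mu>\<bar>"
  have h0: "h > 0" using mu by (simp add: h_def)
  have M0: "0 \<le> M" using bound[of c] cd by (auto intro: order_trans[OF norm_ge_zero])
  have L0: "0 \<le> L" using lip by (rule lipschitz_on_nonneg)
  have cont: "continuous_on {c..d} g" using lip by (rule lipschitz_on_continuous_on)
  have piece: "norm (integral {u..v} (\<lambda>x. cis (\<mu> * x) * g x)) \<le> M * (v - u)"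
    if "c \<le> u" "u \<le> v" "v \<le> d" for u v
    using that bound
    by (intro integral_bound) (auto simp: norm_mult intro!: continuous_intros continuous_on_subset[OF cont])
  show ?thesis
  proof (cases "d - c \<le> h")
    case True
    have "norm (integral {c..d} (\<lambda>x. cis (\<mu> * x) * g x)) \<le> M * h"
      using piece[of c d] cd True M0 by (meson order_refl order_trans mult_left_mono)
    also have "\<dots> \<le> (M + (d - c) * L / 2) * h" using cd L0 h0 by (intro mult_right_mono) auto
    finally show ?thesis by (simp add: h_def)
  next
    case False
    then have chd: "c + h \<le> d" by simp
    have ends: "norm (integral {c..c+h} (\<lambda>x. cis (\<mu> * x) * g x)) \<le> M * h"
      "norm (integral {d-h..d} (\<lambda>x. cis (\<mu> * x) * g x)) \<le> M * h"
      using piece[of c "c+h"] piece[of "d-h" d] chd h0 by auto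
    have variation: "norm (integral {c..d-h} (\<lambda>x. cis (\<mu> * x) * (g x - g (x + h)))) \<le> L * h * ((d - h) - c)"
    proof (rule integral_bound)
      show "c \<le> d - h" using chd by simp
      show "continuous_on {c..d - h} (\<lambda>x. cis (\<mu> * x) * (g x - g (x + h)))"
        using h0 by (auto intro!: continuous_intros continuous_on_subset[OF cont]
            continuous_on_compose2[OF cont])
      fix x assume "x \<in> {c..d-h}"
      then have "norm (g x - g (x + h)) \<le> L * norm (x - (x + h))"
        using h0 by (intro lipschitz_on_normD[OF lip]) auto
      then show "norm (cis (\<mu> * x) * (g x - g (x + h))) \<le> L * h"
        using h0 by (simp add: norm_mult)
    qed
    have "norm (2 * integral {c..d} (\<lambda>x. cis (\<mu> * x) * g x)) \<le> M * h + M * h + L * h * ((d - h) - c)"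
      unfolding integral_cis_half_period_shift[OF cont h_def mu chd]
      by (intro order_trans[OF norm_triangle_ineq] add_mono ends variation)
    also have "\<dots> = 2 * M * h + L * h * (d - c) - L * h * h" by (simp add: algebra_simps)
    also have "\<dots> \<le> 2 * ((M + (d - c) * L / 2) * h)"
      using mult_nonneg_nonneg[OF L0, of "h * h"] h0 by (simp add: field_simps)
    finally show ?thesis by (simp add: h_def)
  qed
qed

lemma oscillatory_integral_le_decay:
  fixes g :: "real \<Rightarrow> complex"
  assumes cd: "c \<le> d" "d - c \<le> T" and T1: "1 \<le> T"
    and bound: "\<And>x. x \<in> {c..d} \<Longrightarrow> norm (g x) \<le> M" and lip: "L-lipschitz_on {c..d} g"
  shows "norm (integral {c..d} (\<lambda>x. cis (\<mu> * x) * g x)) \<le> 2 * pi * T * (M + L) / (1 + \<bar>\<mu>\<bar>)"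
proof -
  have M0: "0 \<le> M" using bound[of c] cd by (auto intro: order_trans[OF norm_ge_zero])
  have L0: "0 \<le> L" using lip by (rule lipschitz_on_nonneg)
  have cont: "continuous_on {c..d} g" using lip by (rule lipschitz_on_continuous_on)
  have TM: "M \<le> T * M" "(d - c) * M \<le> T * M" and TL: "(d - c) * L \<le> T * L" "0 \<le> T * L"
    using mult_right_mono[OF T1 M0] mult_right_mono[OF cd(2) M0] mult_right_mono[OF cd(2) L0] T1 L0
    by auto
  then have size: "M + (d - c) * L / 2 \<le> T * (M + L)"
    by (simp add: distrib_left)
  show ?thesis
  proof (cases "\<bar>\<mu>\<bar> < 1")
    case True
    have "norm (integral {c..d} (\<lambda>x. cis (\<mu> * x) * g x)) \<le> M * (d - c)"
      using cd bound by (intro integral_bound) (auto simp: norm_mult intro!: continuous_intros cont)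
    also have "\<dots> \<le> T * (M + L)" using TM TL by (simp add: distrib_left mult.commute)
    also have "\<dots> \<le> 2 * pi * T * (M + L) / (1 + \<bar>\<mu>\<bar>)"
    proof -
      have "T * (M + L) * (1 + \<bar>\<mu>\<bar>) \<le> T * (M + L) * (2 * pi)"
        using True pi_ge_two T1 M0 L0 by (intro mult_left_mono) auto
      then show ?thesis by (simp add: pos_le_divide_eq add_pos_nonneg mult_ac)
    qed
    finally show ?thesis .
  next
    case False
    have "norm (integral {c..d} (\<lambda>x. cis (\<mu> * x) * g x)) \<le> (M + (d - c) * L / 2) * (pi / \<bar>\<mu>\<bar>)"
      using False by (intro oscillatory_integral_le[OF cd(1) bound lip]) auto
    also have "\<dots> \<le> T * (M + L) * (2 * pi / (1 + \<bar>\<mu>\<bar>))"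
      by (intro mult_mono size) (use False T1 M0 L0 in \<open>auto simp: field_simps\<close>)
    finally show ?thesis by (simp add: mult_ac)
  qed
qed

lemma of_real_sin_mult_cis:
  "complex_of_real (sin ((t - x) * w)) * cis (lam * x) =
     (cis (t * w) * cis ((lam - w) * x) - cis (- (t * w)) * cis ((lam + w) * x)) / (2 * \<i>)"
proof -
  have "cis ((t - x) * w) - cis (- ((t - x) * w)) = 2 * \<i> * complex_of_real (sin ((t - x) * w))"
    by (simp add: cis.ctr complex_eq_iff)
  moreover have "cis ((t - x) * w) * cis (lam * x) = cis (t * w) * cis ((lam - w) * x)"
    "cis (- ((t - x) * w)) * cis (lam * x) = cis (- (t * w)) * cis ((lam + w) * x)"
    unfolding cis_mult by (simp_all add: algebra_simps)
  ultimately show ?thesis by (simp add: field_simps)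
qed

lemma sine_phase_integral_le:
  fixes g :: "real \<Rightarrow> complex"
  assumes cd: "c \<le> d" "d - c \<le> T" and T1: "1 \<le> T"
    and bound: "\<And>x. x \<in> {c..d} \<Longrightarrow> norm (g x) \<le> M" and lip: "L-lipschitz_on {c..d} g"
  shows "norm (integral {c..d} (\<lambda>x. complex_of_real (sin ((t - x) * w)) * cis (lam * x) * g x))
     \<le> pi * T * (M + L) * (1 / (1 + \<bar>lam - w\<bar>) + 1 / (1 + \<bar>lam + w\<bar>))"
proof -
  have cont: "continuous_on {c..d} g" using lip by (rule lipschitz_on_continuous_on)
  define I1 where "I1 = integral {c..d} (\<lambda>x. cis ((lam - w) * x) * g x)"
  define I2 where "I2 = integral {c..d} (\<lambda>x. cis ((lam + w) * x) * g x)"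
  have integrand: "complex_of_real (sin ((t - x) * w)) * cis (lam * x) * g x
      = (cis (t * w) * (cis ((lam - w) * x) * g x) - cis (- (t * w)) * (cis ((lam + w) * x) * g x))
        / (2 * \<i>)" for x
    by (simp only: of_real_sin_mult_cis) (simp add: field_simps)
  have "((\<lambda>x. complex_of_real (sin ((t - x) * w)) * cis (lam * x) * g x)
      has_integral (cis (t * w) * I1 - cis (- (t * w)) * I2) / (2 * \<i>)) {c..d}"
    unfolding I1_def I2_def integrand
    by (intro has_integral_divide has_integral_diff has_integral_mult_right integrable_integral
        integrable_continuous_interval continuous_intros cont)
  then have "integral {c..d} (\<lambda>x. complex_of_real (sin ((t - x) * w)) * cis (lam * x) * g x)
      = (cis (t * w) * I1 - cis (- (t * w)) * I2) / (2 * \<i>)"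
    by (rule integral_unique)
  also have "norm \<dots> \<le> (norm I1 + norm I2) / 2"
    using norm_triangle_ineq4[of "cis (t * w) * I1" "cis (- (t * w)) * I2"]
    by (simp add: norm_divide norm_mult)
  also have "\<dots> \<le> (2 * (pi * T * (M + L) * (1 / (1 + \<bar>lam - w\<bar>)))
      + 2 * (pi * T * (M + L) * (1 / (1 + \<bar>lam + w\<bar>)))) / 2"
    using oscillatory_integral_le_decay[OF cd T1 bound lip, where \<mu> = "lam - w"]
      oscillatory_integral_le_decay[OF cd T1 bound lip, where \<mu> = "lam + w"]
    by (intro divide_right_mono add_mono) (simp_all add: I1_def I2_def)
  also have "\<dots> = pi * T * (M + L) * (1 / (1 + \<bar>lam - w\<bar>) + 1 / (1 + \<bar>lam + w\<bar>))"
    by (simp add: algebra_simps)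
  finally show ?thesis .
qed

lemma abs_sin_add_sin_le:
  fixes a b :: real
  shows "\<bar>sin a + sin b\<bar> \<le> \<bar>a + b\<bar>"
proof -
  have "\<bar>sin a + sin b\<bar> = 2 * \<bar>sin ((a + b) / 2)\<bar> * \<bar>cos ((a - b) / 2)\<bar>"
    by (simp add: sin_plus_sin abs_mult)
  also have "\<dots> \<le> 2 * \<bar>(a + b) / 2\<bar> * 1"
    by (intro mult_mono abs_sin_x_le_abs_x) auto
  finally show ?thesis by simp
qed

lemma norm_sin_cis_pair_le:
  fixes u v :: complex
  shows "norm (complex_of_real (sin (s * w1)) * cis \<theta> * u + complex_of_real (sin (s * w2)) * cis \<theta> * v)
    \<le> norm (u - v) + \<bar>s\<bar> * \<bar>w1 + w2\<bar> * norm v"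
proof -
  have "complex_of_real (sin (s * w1)) * cis \<theta> * u + complex_of_real (sin (s * w2)) * cis \<theta> * v
      = cis \<theta> * (complex_of_real (sin (s * w1)) * (u - v)
          + complex_of_real (sin (s * w1) + sin (s * w2)) * v)"
    by (simp add: algebra_simps)
  then have "norm (complex_of_real (sin (s * w1)) * cis \<theta> * u + complex_of_real (sin (s * w2)) * cis \<theta> * v)
      = norm (complex_of_real (sin (s * w1)) * (u - v) + complex_of_real (sin (s * w1) + sin (s * w2)) * v)"
    by (simp only: norm_mult norm_cis mult_1)
  also have "\<dots> \<le> norm (complex_of_real (sin (s * w1)) * (u - v))
      + norm (complex_of_real (sin (s * w1) + sin (s * w2)) * v)"
    by (rule norm_triangle_ineq)
  also have "\<dots> = \<bar>sin (s * w1)\<bar> * norm (u - v) + \<bar>sin (s * w1) + sin (s * w2)\<bar> * norm v"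
    by (simp only: norm_mult norm_of_real)
  also have "\<dots> \<le> 1 * norm (u - v) + (\<bar>s\<bar> * \<bar>w1 + w2\<bar>) * norm v"
  proof (intro add_mono mult_right_mono)
    have "\<bar>sin (s * w1) + sin (s * w2)\<bar> \<le> \<bar>s * w1 + s * w2\<bar>" by (rule abs_sin_add_sin_le)
    then show "\<bar>sin (s * w1) + sin (s * w2)\<bar> \<le> \<bar>s\<bar> * \<bar>w1 + w2\<bar>"
      by (simp add: abs_mult[symmetric] distrib_left)
  qed auto
  finally show ?thesis by simp
qed

text \<open>Here there is no oscillation to exploit; instead the two phases nearly cancel.\<close>

lemma sine_phase_pair_integral_le:
  fixes g1 g2 :: "real \<Rightarrow> complex"
  assumes cd: "c \<le> d" "d - c \<le> T"
    and c1: "continuous_on {c..d} g1" and c2: "continuous_on {c..d} g2"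
    and E: "\<And>x. x \<in> {c..d} \<Longrightarrow> norm (g1 x - g2 x) \<le> E"
    and M: "\<And>x. x \<in> {c..d} \<Longrightarrow> norm (g2 x) \<le> M"
    and tx: "\<And>x. x \<in> {c..d} \<Longrightarrow> \<bar>t - x\<bar> \<le> T"
    and W: "\<bar>w1 + w2\<bar> \<le> W"
  shows "norm (integral {c..d} (\<lambda>x. complex_of_real (sin ((t - x) * w1)) * cis (lam * x) * g1 x)
     + integral {c..d} (\<lambda>x. complex_of_real (sin ((t - x) * w2)) * cis (lam * x) * g2 x))
     \<le> T * (E + T * W * M)"
proof -
  have E0: "0 \<le> E" using E[of c] cd by (auto intro: order_trans[OF norm_ge_zero])
  have M0: "0 \<le> M" using M[of c] cd by (auto intro: order_trans[OF norm_ge_zero])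
  have T0: "0 \<le> T" and W0: "0 \<le> W" using cd W by linarith+
  have "integral {c..d} (\<lambda>x. complex_of_real (sin ((t - x) * w1)) * cis (lam * x) * g1 x)
     + integral {c..d} (\<lambda>x. complex_of_real (sin ((t - x) * w2)) * cis (lam * x) * g2 x)
     = integral {c..d} (\<lambda>x. complex_of_real (sin ((t - x) * w1)) * cis (lam * x) * g1 x
         + complex_of_real (sin ((t - x) * w2)) * cis (lam * x) * g2 x)"
    by (intro integral_add[symmetric] integrable_continuous_interval continuous_intros c1 c2)
  also have "norm \<dots> \<le> (E + T * W * M) * (d - c)"
  proof (rule integral_bound[OF cd(1)])
    show "continuous_on {c..d} (\<lambda>x. complex_of_real (sin ((t - x) * w1)) * cis (lam * x) * g1 x
         + complex_of_real (sin ((t - x) * w2)) * cis (lam * x) * g2 x)"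
      by (intro continuous_intros c1 c2)
    fix x assume x: "x \<in> {c..d}"
    have "norm (complex_of_real (sin ((t - x) * w1)) * cis (lam * x) * g1 x
         + complex_of_real (sin ((t - x) * w2)) * cis (lam * x) * g2 x)
        \<le> norm (g1 x - g2 x) + \<bar>t - x\<bar> * \<bar>w1 + w2\<bar> * norm (g2 x)"
      by (rule norm_sin_cis_pair_le)
    also have "\<dots> \<le> E + T * W * M"
      using E[OF x] M[OF x] tx[OF x] W T0 by (intro add_mono mult_mono) auto
    finally show "norm (complex_of_real (sin ((t - x) * w1)) * cis (lam * x) * g1 x
         + complex_of_real (sin ((t - x) * w2)) * cis (lam * x) * g2 x) \<le> E + T * W * M" .
  qed
  also have "\<dots> \<le> T * (E + T * W * M)"
    using mult_right_mono[OF cd(2), of "E + T * W * M"] E0 M0 T0 W0 by (simp add: mult.commute)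
  finally show ?thesis .
qed

lemma integral_sin_mult_cos:
  fixes g :: "real \<Rightarrow> complex"
  assumes cont: "continuous_on {c..d} g"
  shows "integral {c..d} (\<lambda>x. complex_of_real (sin ((t - x) * \<alpha>) * cos ((t - x) * \<beta>)) * cis (lam * x) * g x)
    = (integral {c..d} (\<lambda>x. complex_of_real (sin ((t - x) * (\<alpha> + \<beta>))) * cis (lam * x) * g x)
     + integral {c..d} (\<lambda>x. complex_of_real (sin ((t - x) * (\<alpha> - \<beta>))) * cis (lam * x) * g x)) / 2"
    (is "_ = (integral _ ?F1 + integral _ ?F2) / 2")
proof (rule integral_unique)
  have "sin ((t - x) * \<alpha>) * cos ((t - x) * \<beta>)
      = (sin ((t - x) * (\<alpha> + \<beta>)) + sin ((t - x) * (\<alpha> - \<beta>))) / 2" for x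
    unfolding sin_times_cos by (simp add: algebra_simps)
  then have integrand: "complex_of_real (sin ((t - x) * \<alpha>) * cos ((t - x) * \<beta>)) * cis (lam * x) * g x
      = (?F1 x + ?F2 x) / 2" for x
    by (simp only:) (simp add: algebra_simps add_divide_distrib)
  show "((\<lambda>x. complex_of_real (sin ((t - x) * \<alpha>) * cos ((t - x) * \<beta>)) * cis (lam * x) * g x)
      has_integral (integral {c..d} ?F1 + integral {c..d} ?F2) / 2) {c..d}"
    unfolding integrand
    by (intro has_integral_divide has_integral_add integrable_integral integrable_continuous_interval
        continuous_intros cont)
qed

lemma interval_integral_indicator_eq_integral_Int:
  fixes \<psi> :: "real \<Rightarrow> complex"
  assumes J: "is_interval J" and ab: "a \<le> b" and cont: "continuous_on {a..b} \<psi>"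
  shows "(LBINT x=ereal a..ereal b. complex_of_real (indicator J x) * \<psi> x) = integral (J \<inter> {a..b}) \<psi>"
proof -
  have "J \<in> sets lborel" using real_interval_borel_measurable[OF J] by simp
  moreover have "set_integrable lborel {a..b} \<psi>" by (rule borel_integrable_atLeastAtMost'[OF cont])
  ultimately have "integrable lborel (\<lambda>x. indicator J x *\<^sub>R (indicator {a..b} x *\<^sub>R \<psi> x))"
    unfolding set_integrable_def by (rule integrable_mult_indicator)
  moreover have "(\<lambda>x. indicator {a..b} x *\<^sub>R (complex_of_real (indicator J x) * \<psi> x))
     = (\<lambda>x. indicator J x *\<^sub>R (indicator {a..b} x *\<^sub>R \<psi> x))"
    by (auto simp: indicator_def fun_eq_iff)
  ultimately have "set_integrable lborel {a..b} (\<lambda>x. complex_of_real (indicator J x) * \<psi> x)"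
    unfolding set_integrable_def by simp
  then have "(LBINT x=ereal a..ereal b. complex_of_real (indicator J x) * \<psi> x)
      = integral {a..b} (\<lambda>x. complex_of_real (indicator J x) * \<psi> x)"
    by (rule interval_integral_eq_integral[OF ab])
  also have "\<dots> = integral {a..b} (\<lambda>x. if x \<in> J then \<psi> x else 0)"
    by (rule integral_cong) (auto simp: indicator_def)
  also have "\<dots> = integral (J \<inter> {a..b}) \<psi>" by (rule integral_restrict_Int)
  finally show ?thesis .
qed

text \<open>A bounded interval differs from its closure by at most two points.\<close>

lemma integral_interval_eq_integral_Icc:
  fixes \<psi> :: "real \<Rightarrow> 'a::banach"
  assumes K: "is_interval K" "K \<noteq> {}" "bdd_below K" "bdd_above K"
  shows "integral K \<psi> = integral {Inf K..Sup K} \<psi>"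
proof (rule integral_spike_set)
  have K_sub: "K \<subseteq> {Inf K..Sup K}" using K by (auto intro: cInf_lower cSup_upper)
  then have "{x \<in> K - {Inf K..Sup K}. \<psi> x \<noteq> 0} = {}" by auto
  then show "negligible {x \<in> K - {Inf K..Sup K}. \<psi> x \<noteq> 0}" by (metis negligible_empty)
  have "{Inf K<..<Sup K} \<subseteq> K"
  proof
    fix x assume x: "x \<in> {Inf K<..<Sup K}"
    obtain u where "u \<in> K" "u < x" using x K by (meson cInf_lessD greaterThanLessThan_iff)
    moreover obtain v where "v \<in> K" "x < v" using x K by (meson less_cSupE greaterThanLessThan_iff)
    ultimately show "x \<in> K" using K(1) unfolding is_interval_1 by (meson less_imp_le)
  qed
  then have "{x \<in> {Inf K..Sup K} - K. \<psi> x \<noteq> 0} \<subseteq> {Inf K, Sup K}" by force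
  then show "negligible {x \<in> {Inf K..Sup K} - K. \<psi> x \<noteq> 0}" by (rule negligible_subset[rotated]) auto
qed

lemma interval_integral_indicator_eq_integral:
  assumes J: "is_interval J" and ab: "a \<le> b"
  obtains c d where "a \<le> c" "c \<le> d" "d \<le> b"
    "\<And>\<psi> :: real \<Rightarrow> complex. continuous_on {a..b} \<psi> \<Longrightarrow>
       (LBINT x=ereal a..ereal b. complex_of_real (indicator J x) * \<psi> x) = integral {c..d} \<psi>"
proof (cases "J \<inter> {a..b} = {}")
  case True
  then show ?thesis using that[of a a] interval_integral_indicator_eq_integral_Int[OF J ab] ab by auto
next
  case False
  have K: "is_interval (J \<inter> {a..b})" "bdd_below (J \<inter> {a..b})" "bdd_above (J \<inter> {a..b})"
    by (auto intro: is_interval_Int J is_interval_cc)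
  have "a \<le> Inf (J \<inter> {a..b})" "Sup (J \<inter> {a..b}) \<le> b" "Inf (J \<inter> {a..b}) \<le> Sup (J \<inter> {a..b})"
    using False K by (auto intro: cInf_greatest cSup_least cInf_le_cSup)
  then show ?thesis
    using interval_integral_indicator_eq_integral_Int[OF J ab]
      integral_interval_eq_integral_Icc[OF K(1) False K(2,3)]
    by (intro that[of "Inf (J \<inter> {a..b})" "Sup (J \<inter> {a..b})"]) simp_all
qed

lemma interval_integral_zero_if_neg:
  fixes F :: "real \<Rightarrow> complex"
  assumes "\<And>x. x < 0 \<Longrightarrow> F x = 0" and "t < 0"
  shows "(LBINT x=ereal 0..ereal t. F x) = 0"
proof -
  have "(\<lambda>x. indicator (einterval (ereal t) (ereal 0)) x *\<^sub>R F x) = (\<lambda>x. 0)"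
    using assms(1) by (auto simp: indicator_def fun_eq_iff)
  then show ?thesis
    using assms(2) by (simp add: interval_lebesgue_integral_def set_lebesgue_integral_def)
qed

section \<open>Harmonic sums\<close>

lemma harm_le_one_plus_ln:
  assumes "1 \<le> n"
  shows "harm n \<le> 1 + ln (real n)"
  using euler_mascheroni_sequence_decreasing[of 1 n] assms by (simp add: harm_def)

lemma sum_inverse_one_plus_dist_le:
  fixes p q m0 :: int
  assumes "p \<le> m0" "m0 \<le> q"
  shows "(\<Sum>m\<in>{p..q}. 1 / (1 + real_of_int \<bar>m - m0\<bar>)) \<le> 2 * harm (nat (q - p) + 1)"
proof -
  have harm_eq: "(\<Sum>i\<in>{0..K}. 1 / (1 + real i)) = harm (Suc K)" for K
    unfolding harm_altdef
    by (rule sum.cong) (auto simp: inverse_eq_divide atLeast0AtMost lessThan_Suc_atMost)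
  have "{p..q} = {p..m0-1} \<union> {m0..q}" using assms by auto
  then have "(\<Sum>m\<in>{p..q}. 1 / (1 + real_of_int \<bar>m - m0\<bar>)) =
      (\<Sum>m\<in>{p..m0-1}. 1 / (1 + real_of_int \<bar>m - m0\<bar>)) + (\<Sum>m\<in>{m0..q}. 1 / (1 + real_of_int \<bar>m - m0\<bar>))"
    by (simp add: sum.union_disjoint)
  also have "(\<Sum>m\<in>{m0..q}. 1 / (1 + real_of_int \<bar>m - m0\<bar>)) = (\<Sum>i\<in>{0..nat (q-m0)}. 1 / (1 + real i))"
  proof -
    have "{m0..q} = (\<lambda>i. m0 + int i) ` {0..nat (q-m0)}"
      using assms by (auto simp: image_iff le_nat_iff intro!: bexI[of _ "nat (x - m0)" for x])
    moreover have "inj_on (\<lambda>i. m0 + int i) {0..nat (q-m0)}" by (auto simp: inj_on_def)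
    ultimately show ?thesis by (simp add: sum.reindex)
  qed
  also have "(\<Sum>m\<in>{p..m0-1}. 1 / (1 + real_of_int \<bar>m - m0\<bar>)) \<le> (\<Sum>i\<in>{0..nat (m0-1-p)}. 1 / (1 + real i))"
  proof (cases "p \<le> m0 - 1")
    case True
    have "{p..m0-1} = (\<lambda>i. m0 - 1 - int i) ` {0..nat (m0-1-p)}"
      using True by (auto simp: image_iff le_nat_iff intro!: bexI[of _ "nat (m0 - 1 - x)" for x])
    moreover have "inj_on (\<lambda>i. m0 - 1 - int i) {0..nat (m0-1-p)}" by (auto simp: inj_on_def)
    ultimately have "(\<Sum>m\<in>{p..m0-1}. 1 / (1 + real_of_int \<bar>m - m0\<bar>))
        = (\<Sum>i\<in>{0..nat (m0-1-p)}. 1 / (2 + real i))"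
      by (simp add: sum.reindex algebra_simps)
    also have "\<dots> \<le> (\<Sum>i\<in>{0..nat (m0-1-p)}. 1 / (1 + real i))"
      by (intro sum_mono) (auto simp: field_simps)
    finally show ?thesis .
  qed (simp add: sum_nonneg)
  also have "(\<Sum>i\<in>{0..nat (m0-1-p)}. 1 / (1 + real i)) \<le> harm (nat (q - p) + 1)"
    unfolding harm_eq using assms by (intro harm_mono) auto
  also have "(\<Sum>i\<in>{0..nat (q-m0)}. 1 / (1 + real i)) \<le> harm (nat (q - p) + 1)"
    unfolding harm_eq using assms by (intro harm_mono) auto
  finally show ?thesis by simp
qed

text \<open>With \<open>m\<^sub>0\<close> the point nearest to resonance, separation gives
  \<open>\<bar>m - m\<^sub>0\<bar> \<le> 4 \<bar>lam - y m\<bar>\<close>, so the weights are dominated by a harmonic sum.\<close>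

lemma sum_separated_resonances_le:
  fixes Z :: "int set" and y :: "int \<Rightarrow> real"
  assumes Z: "Z \<subseteq> {p..q}" and pq: "p \<le> q"
    and sep: "\<And>m m'. m \<in> Z \<Longrightarrow> m' \<in> Z \<Longrightarrow> \<bar>real_of_int (m - m')\<bar> / 2 \<le> \<bar>y m - y m'\<bar>"
  shows "(\<Sum>m\<in>Z. 1 / (1 + \<bar>lam - y m\<bar>)) \<le> 8 * (1 + ln (real_of_int (q - p) + 1))"
proof (cases "Z = {}")
  case True
  then show ?thesis using pq by simp
next
  case False
  have fin: "finite Z" using Z finite_subset by blast
  define m0 where "m0 = arg_min_on (\<lambda>m. \<bar>lam - y m\<bar>) Z"
  have m0: "m0 \<in> Z" unfolding m0_def using arg_min_if_finite(1)[OF fin False] .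
  have m0_min: "\<bar>lam - y m0\<bar> \<le> \<bar>lam - y m\<bar>" if "m \<in> Z" for m
    unfolding m0_def using arg_min_least[OF fin False that] .
  have "1 / (1 + \<bar>lam - y m\<bar>) \<le> 4 * (1 / (1 + real_of_int \<bar>m - m0\<bar>))" if m: "m \<in> Z" for m
  proof -
    have "\<bar>real_of_int (m - m0)\<bar> / 2 \<le> \<bar>lam - y m\<bar> + \<bar>lam - y m0\<bar>"
      using sep[OF m m0] by linarith
    then have "real_of_int \<bar>m - m0\<bar> \<le> 4 * \<bar>lam - y m\<bar>" using m0_min[OF m] by simp
    then show ?thesis by (simp add: field_simps)
  qed
  then have "(\<Sum>m\<in>Z. 1 / (1 + \<bar>lam - y m\<bar>)) \<le> (\<Sum>m\<in>Z. 4 * (1 / (1 + real_of_int \<bar>m - m0\<bar>)))"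
    by (rule sum_mono)
  also have "\<dots> \<le> (\<Sum>m\<in>{p..q}. 4 * (1 / (1 + real_of_int \<bar>m - m0\<bar>)))"
    by (intro sum_mono2 Z) auto
  also have "\<dots> = 4 * (\<Sum>m\<in>{p..q}. 1 / (1 + real_of_int \<bar>m - m0\<bar>))"
    by (simp add: sum_distrib_left)
  also have "\<dots> \<le> 4 * (2 * harm (nat (q - p) + 1))"
    using m0 Z by (intro mult_left_mono sum_inverse_one_plus_dist_le) auto
  also have "harm (nat (q - p) + 1) \<le> 1 + ln (real_of_int (q - p) + 1)"
    using harm_le_one_plus_ln[of "nat (q - p) + 1"] pq by (simp add: add.commute)
  finally show ?thesis by simp
qed

section \<open>The lattice \<open>\<int>\<^sup>3\<close>\<close>

lemma z3norm_eq: "z3norm (x, y, z) = sqrt (real_of_int x ^ 2 + real_of_int y ^ 2 + real_of_int z ^ 2)"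
  by (simp add: z3norm_def)

lemma jbr_eq: "jbr (x, y, z) = sqrt (1 + real_of_int x ^ 2 + real_of_int y ^ 2 + real_of_int z ^ 2)"
  by (simp add: jbr_def z3norm_def add.assoc)

lemma z3add_eq: "z3add (p, q, r) (x, y, z) = (p + x, q + y, r + z)"
  by (simp add: z3add_def)

lemma z3neg_eq: "z3neg (x, y, z) = (- x, - y, - z)"
  by (simp add: z3neg_def)

lemma z3norm_nonneg: "0 \<le> z3norm n"
  by (cases n) (simp add: z3norm_eq)

lemma z3norm_z3neg [simp]: "z3norm (z3neg n) = z3norm n"
  by (cases n) (simp add: z3norm_eq z3neg_eq)

lemma jbr_z3neg [simp]: "jbr (z3neg n) = jbr n"
  by (simp add: jbr_def)

lemma z3neg_z3neg [simp]: "z3neg (z3neg n) = n"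
  by (cases n) (simp add: z3neg_eq)

lemma z3norm_le_jbr: "z3norm n \<le> jbr n"
  unfolding jbr_def by (rule real_le_rsqrt) simp

lemma one_le_jbr: "1 \<le> jbr n"
  unfolding jbr_def by (rule real_le_rsqrt) simp

lemma jbr_powr_neg_numeral: "jbr n powr (- numeral k) = 1 / jbr n ^ numeral k"
  using one_le_jbr[of n] by (simp add: powr_minus_divide powr_numeral)

lemma abs_coord_le_z3norm:
  "\<bar>real_of_int x\<bar> \<le> z3norm (x, y, z)" "\<bar>real_of_int y\<bar> \<le> z3norm (x, y, z)"
  "\<bar>real_of_int z\<bar> \<le> z3norm (x, y, z)"
  unfolding z3norm_eq by (rule real_le_rsqrt; simp)+

definition cube :: "int \<Rightarrow> z3 set" where
  "cube M = {-M..M} \<times> {-M..M} \<times> {-M..M}"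

lemma finite_cube [simp]: "finite (cube M)"
  by (simp add: cube_def)

lemma card_cube: "0 \<le> M \<Longrightarrow> card (cube M) = nat (2 * M + 1) ^ 3"
  by (simp add: cube_def card_cartesian_product power3_eq_cube)

lemma z3neg_in_cube_iff [simp]: "z3neg n \<in> cube M \<longleftrightarrow> n \<in> cube M"
  by (cases n) (auto simp: cube_def z3neg_eq)

lemma z3norm_gt_if_notin_cube:
  assumes "n \<notin> cube M"
  shows "real_of_int M < z3norm n"
proof -
  obtain x y z where n: "n = (x, y, z)" by (cases n)
  have "M < \<bar>x\<bar> \<or> M < \<bar>y\<bar> \<or> M < \<bar>z\<bar>" using assms unfolding n cube_def by auto
  then have "real_of_int M < \<bar>real_of_int x\<bar> \<or> real_of_int M < \<bar>real_of_int y\<bar>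
      \<or> real_of_int M < \<bar>real_of_int z\<bar>"
    by (metis of_int_abs of_int_less_iff)
  then show ?thesis using abs_coord_le_z3norm[where x = x and y = y and z = z] unfolding n by linarith
qed

lemma sqrt_diff_ge_half:
  fixes B u v :: real
  assumes u1: "1 \<le> u" and uv: "u \<le> v" and B0: "0 \<le> B" and Bu: "B \<le> 1 + 2 * u\<^sup>2"
  shows "(v - u) / 2 \<le> sqrt (B + v\<^sup>2) - sqrt (B + u\<^sup>2)"
proof -
  define S1 where "S1 = sqrt (B + u\<^sup>2)"
  define S2 where "S2 = sqrt (B + v\<^sup>2)"
  have u2: "1 \<le> u\<^sup>2" and uv2: "u\<^sup>2 \<le> v\<^sup>2" using u1 uv by (simp_all add: one_le_power power_mono)
  have "B + u\<^sup>2 \<le> (2 * u)\<^sup>2" "B + v\<^sup>2 \<le> (2 * v)\<^sup>2"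
    using Bu u2 uv2 unfolding power_mult_distrib by auto
  then have "S1 \<le> 2 * u" "S2 \<le> 2 * v" unfolding S1_def S2_def using u1 uv by (auto intro: real_le_lsqrt)
  then have sum_le: "S1 + S2 \<le> 2 * (v + u)" by simp
  have "S1 \<le> S2" unfolding S1_def S2_def using uv2 by simp
  have "(v - u) * (v + u) = (S2 - S1) * (S1 + S2)"
    using B0 unfolding S1_def S2_def by (simp add: power2_eq_square algebra_simps)
  also have "\<dots> \<le> (S2 - S1) * (2 * (v + u))"
    using sum_le \<open>S1 \<le> S2\<close> by (intro mult_left_mono) auto
  finally have "(v - u) * (v + u) \<le> (2 * (S2 - S1)) * (v + u)" by (simp add: algebra_simps)
  then have "v - u \<le> 2 * (S2 - S1)" using u1 uv by (simp add: mult_le_cancel_right)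
  then show ?thesis unfolding S1_def S2_def by simp
qed

lemma lagrange_identity4:
  fixes a b c d e f g h :: real
  shows "(a\<^sup>2 + b\<^sup>2 + c\<^sup>2 + d\<^sup>2) * (e\<^sup>2 + f\<^sup>2 + g\<^sup>2 + h\<^sup>2) - (a * e + b * f + c * g + d * h)\<^sup>2 =
    (a * f - b * e)\<^sup>2 + (a * g - c * e)\<^sup>2 + (a * h - d * e)\<^sup>2 + (b * g - c * f)\<^sup>2
    + (b * h - d * f)\<^sup>2 + (c * h - d * g)\<^sup>2"
  by algebra

lemma sqrt_second_difference:
  fixes x y z p q r :: real
  defines "P \<equiv> sqrt (1 + (p + x)\<^sup>2 + (q + y)\<^sup>2 + (r + z)\<^sup>2)"
    and "Q \<equiv> sqrt (1 + (p - x)\<^sup>2 + (q - y)\<^sup>2 + (r - z)\<^sup>2)"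
    and "R \<equiv> sqrt (1 + x\<^sup>2 + y\<^sup>2 + z\<^sup>2)"
  shows "0 \<le> P + Q - 2 * R" and "P + Q - 2 * R \<le> (p\<^sup>2 + q\<^sup>2 + r\<^sup>2) / R"
proof -
  define s where "s = p\<^sup>2 + q\<^sup>2 + r\<^sup>2"
  have s0: "0 \<le> s" unfolding s_def by simp
  have "0 \<le> 1 + (p + x)\<^sup>2 + (q + y)\<^sup>2 + (r + z)\<^sup>2" "0 \<le> 1 + (p - x)\<^sup>2 + (q - y)\<^sup>2 + (r - z)\<^sup>2"
    "0 \<le> 1 + x\<^sup>2 + y\<^sup>2 + z\<^sup>2"
    by (simp_all add: add_nonneg_nonneg)
  then have P2: "P\<^sup>2 = 1 + (p + x)\<^sup>2 + (q + y)\<^sup>2 + (r + z)\<^sup>2"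
    and Q2: "Q\<^sup>2 = 1 + (p - x)\<^sup>2 + (q - y)\<^sup>2 + (r - z)\<^sup>2"
    and R2: "R\<^sup>2 = 1 + x\<^sup>2 + y\<^sup>2 + z\<^sup>2"
    unfolding P_def Q_def R_def by simp_all
  have PQ0: "0 \<le> P" "0 \<le> Q" unfolding P_def Q_def by simp_all
  have R1: "1 \<le> R" unfolding R_def by (rule real_le_rsqrt) (simp add: add_nonneg_nonneg)
  have sum_sq: "P\<^sup>2 + Q\<^sup>2 = 2 * R\<^sup>2 + 2 * s"
    unfolding P2 Q2 R2 s_def by (simp add: power2_eq_square algebra_simps)
  \<comment> \<open>Cauchy-Schwarz for \<open>(1, x + p, y + q, z + r)\<close> and \<open>(1, x - p, y - q, z - r)\<close>\<close>
  have "P\<^sup>2 * Q\<^sup>2 - (R\<^sup>2 - s)\<^sup>2 =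
      (1\<^sup>2 + (x + p)\<^sup>2 + (y + q)\<^sup>2 + (z + r)\<^sup>2) * (1\<^sup>2 + (x - p)\<^sup>2 + (y - q)\<^sup>2 + (z - r)\<^sup>2)
      - (1 * 1 + (x + p) * (x - p) + (y + q) * (y - q) + (z + r) * (z - r))\<^sup>2"
    unfolding P2 Q2 R2 s_def by (simp add: power2_eq_square algebra_simps)
  also have "\<dots> \<ge> 0" unfolding lagrange_identity4 by simp
  finally have "(R\<^sup>2 - s)\<^sup>2 \<le> P\<^sup>2 * Q\<^sup>2" by simp
  moreover have "(P * Q)\<^sup>2 = P\<^sup>2 * Q\<^sup>2" by (rule power_mult_distrib)
  ultimately have "(R\<^sup>2 - s)\<^sup>2 \<le> (P * Q)\<^sup>2" by simp
  moreover have "0 \<le> P * Q" using PQ0 by simp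
  ultimately have PQ: "R\<^sup>2 - s \<le> P * Q" by (rule power2_le_imp_le)
  have sum2: "(P + Q)\<^sup>2 = P\<^sup>2 + Q\<^sup>2 + 2 * (P * Q)" by (simp add: power2_sum)
  have R4: "(2 * R)\<^sup>2 = 4 * R\<^sup>2" by (simp add: power_mult_distrib)
  have lower: "(2 * R)\<^sup>2 \<le> (P + Q)\<^sup>2" using sum_sq PQ sum2 R4 by linarith
  show "0 \<le> P + Q - 2 * R" using power2_le_imp_le[OF lower] PQ0 by simp
  have "(P - Q)\<^sup>2 = P\<^sup>2 + Q\<^sup>2 - 2 * (P * Q)" by (simp add: power2_diff)
  then have "(P + Q)\<^sup>2 \<le> 4 * R\<^sup>2 + 4 * s" using sum_sq sum2 zero_le_power2[of "P - Q"] by linarith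
  also have "\<dots> \<le> (2 * R + s / R)\<^sup>2"
  proof -
    have "(2 * R + s / R)\<^sup>2 = 4 * R\<^sup>2 + 4 * s + (s / R)\<^sup>2" using R1 by (simp add: power2_eq_square field_simps)
    then show ?thesis using zero_le_power2[of "s / R"] by linarith
  qed
  finally have upper: "(P + Q)\<^sup>2 \<le> (2 * R + s / R)\<^sup>2" .
  have "0 \<le> 2 * R + s / R" using R1 s0 by simp
  with upper have "P + Q \<le> 2 * R + s / R" by (rule power2_le_imp_le)
  then show "P + Q - 2 * R \<le> (p\<^sup>2 + q\<^sup>2 + r\<^sup>2) / R" unfolding s_def by simp
qed

lemma abs_jbr_second_difference_le:
  "\<bar>(jbr (z3add a n) - jbr n) + (jbr (z3add a (z3neg n)) - jbr (z3neg n))\<bar> \<le> z3norm a ^ 2 / jbr n"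
proof -
  obtain x y z where n: "n = (x, y, z)" by (cases n)
  obtain p q r where a: "a = (p, q, r)" by (cases a)
  have "z3norm (p, q, r) ^ 2 = real_of_int p ^ 2 + real_of_int q ^ 2 + real_of_int r ^ 2"
    unfolding z3norm_eq by (simp add: add_nonneg_nonneg)
  then show ?thesis
    using sqrt_second_difference[of "real_of_int p" "real_of_int x" "real_of_int q" "real_of_int y"
        "real_of_int r" "real_of_int z"]
    unfolding n a z3add_eq z3neg_eq jbr_eq by (simp add: add.assoc)
qed

section \<open>Resonance weights on a dyadic shell\<close>

definition phase_sum :: "z3 \<Rightarrow> z3 \<Rightarrow> real" where
  "phase_sum a n = jbr (z3add a n) + jbr n"

definition resonance :: "real \<Rightarrow> z3 \<Rightarrow> z3 \<Rightarrow> real" where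
  "resonance lam a n = 1 / (1 + \<bar>lam - phase_sum a n\<bar>)"

lemma resonance_nonneg: "0 \<le> resonance lam a n"
  by (simp add: resonance_def)

definition shell :: "int \<Rightarrow> real \<Rightarrow> z3 set" where
  "shell M N = {n \<in> cube M. N / 2 < z3norm n}"

definition cone :: "int \<Rightarrow> real \<Rightarrow> z3 set" where
  "cone M N = {(x, y, z). (x, y, z) \<in> shell M N \<and> 0 \<le> z \<and> x\<^sup>2 + y\<^sup>2 \<le> 2 * z\<^sup>2}"

definition cone_column :: "int \<Rightarrow> real \<Rightarrow> int \<Rightarrow> int \<Rightarrow> int set" where
  "cone_column M N x y = {z. (x, y, z) \<in> cone M N}"

lemma finite_cone [simp]: "finite (cone M N)"
  by (rule finite_subset[of _ "cube M"]) (auto simp: cone_def shell_def)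

lemma cone_column_subset: "cone_column M N x y \<subseteq> {0..M}"
  by (auto simp: cone_column_def cone_def shell_def cube_def)

lemma cone_eq_Sigma: "cone M N = Sigma {-M..M} (\<lambda>x. Sigma {-M..M} (\<lambda>y. cone_column M N x y))"
  by (auto simp: cone_column_def cone_def shell_def cube_def)

lemma cone_column_bounds:
  assumes z: "z \<in> cone_column M N x y" and N8: "8 \<le> N" and r: "\<bar>real_of_int r\<bar> \<le> N / 4"
  shows "1 \<le> z" and "0 \<le> z + r"
proof -
  have z0: "0 \<le> z" and far: "N / 2 < z3norm (x, y, z)" and "x\<^sup>2 + y\<^sup>2 \<le> 2 * z\<^sup>2"
    using z by (auto simp: cone_column_def cone_def shell_def)
  then have "real_of_int (x\<^sup>2 + y\<^sup>2) \<le> real_of_int (2 * z\<^sup>2)" by (simp only: of_int_le_iff)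
  then have xy: "real_of_int x ^ 2 + real_of_int y ^ 2 \<le> 2 * real_of_int z ^ 2" by simp
  have "(N / 2)\<^sup>2 < real_of_int x ^ 2 + real_of_int y ^ 2 + real_of_int z ^ 2"
  proof (rule ccontr)
    assume "\<not> ?thesis"
    then have "sqrt (real_of_int x ^ 2 + real_of_int y ^ 2 + real_of_int z ^ 2) \<le> N / 2"
      using N8 by (intro real_le_lsqrt) auto
    then show False using far unfolding z3norm_eq by simp
  qed
  then have z_big: "N\<^sup>2 / 12 < real_of_int z ^ 2" using xy by (simp add: power_divide)
  have "real_of_int r ^ 2 \<le> (N / 4)\<^sup>2" using r by (metis abs_ge_zero power2_abs power_mono)
  then have "real_of_int r ^ 2 \<le> N\<^sup>2 / 16" by (simp add: power_divide)
  then have "real_of_int r ^ 2 < real_of_int z ^ 2" using z_big zero_le_power2[of "real_of_int z"] by linarith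
  then have "\<bar>real_of_int r\<bar> < \<bar>real_of_int z\<bar>" by (simp add: power2_less_imp_less abs_less_iff)
  then show "0 \<le> z + r" using z0 by linarith
  have "64 \<le> N\<^sup>2" using power_mono[OF N8, of 2] by simp
  then have "1 < real_of_int z ^ 2" using z_big by linarith
  then show "1 \<le> z" using z0 by (cases "z = 0") auto
qed

text \<open>Along a column of the cone the second bracket grows at rate at least \<open>1/2\<close> and the first one
  does not decrease, since \<open>z + r\<close> stays nonnegative.\<close>

lemma phase_sum_column_gap:
  assumes z: "z \<in> cone_column M N x y" and z': "z' \<in> cone_column M N x y" and zz': "z \<le> z'"
    and N8: "8 \<le> N" and a: "z3norm a \<le> N / 4"
  shows "real_of_int (z' - z) / 2 \<le> phase_sum a (x, y, z') - phase_sum a (x, y, z)"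
proof -
  obtain p q r where a_eq: "a = (p, q, r)" by (cases a)
  have "\<bar>real_of_int r\<bar> \<le> N / 4" using a abs_coord_le_z3norm(3)[where x = p and y = q and z = r] unfolding a_eq by linarith
  note bounds = cone_column_bounds[OF z N8 this]
  have "real_of_int (r + z) ^ 2 \<le> real_of_int (r + z') ^ 2"
    using bounds zz' by (intro power_mono) auto
  then have first: "jbr (z3add a (x, y, z)) \<le> jbr (z3add a (x, y, z'))"
    unfolding a_eq z3add_eq jbr_eq by simp
  have "x\<^sup>2 + y\<^sup>2 \<le> 2 * z\<^sup>2" using z by (auto simp: cone_column_def cone_def)
  then have "real_of_int (x\<^sup>2 + y\<^sup>2) \<le> real_of_int (2 * z\<^sup>2)" by (simp only: of_int_le_iff)
  then have "real_of_int x ^ 2 + real_of_int y ^ 2 \<le> 2 * real_of_int z ^ 2" by simp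
  then have "(real_of_int z' - real_of_int z) / 2
      \<le> sqrt ((1 + real_of_int x ^ 2 + real_of_int y ^ 2) + real_of_int z' ^ 2)
        - sqrt ((1 + real_of_int x ^ 2 + real_of_int y ^ 2) + real_of_int z ^ 2)"
    using bounds zz' by (intro sqrt_diff_ge_half) auto
  then have "real_of_int (z' - z) / 2 \<le> jbr (x, y, z') - jbr (x, y, z)"
    by (simp add: jbr_eq add.assoc)
  then show ?thesis using first unfolding phase_sum_def by linarith
qed

lemma sum_resonance_column_le:
  assumes M0: "0 \<le> M" and N8: "8 \<le> N" and a: "z3norm a \<le> N / 4"
  shows "(\<Sum>z\<in>cone_column M N x y. resonance lam a (x, y, z)) \<le> 8 * (1 + ln (real_of_int M + 1))"
proof -
  have "\<bar>real_of_int (z - z')\<bar> / 2 \<le> \<bar>phase_sum a (x, y, z) - phase_sum a (x, y, z')\<bar>"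
    if "z \<in> cone_column M N x y" "z' \<in> cone_column M N x y" for z z'
  proof (cases "z \<le> z'")
    case True
    then have "\<bar>real_of_int (z - z')\<bar> = real_of_int (z' - z)" by simp
    then show ?thesis
      using phase_sum_column_gap[OF that True N8 a]
        abs_ge_minus_self[of "phase_sum a (x, y, z) - phase_sum a (x, y, z')"] by (smt (verit))
  next
    case False
    then have "\<bar>real_of_int (z - z')\<bar> = real_of_int (z - z')" by simp
    then show ?thesis
      using phase_sum_column_gap[OF that(2,1) _ N8 a] False
        abs_ge_self[of "phase_sum a (x, y, z) - phase_sum a (x, y, z')"] by (smt (verit))
  qed
  then show ?thesis
    using sum_separated_resonances_le[OF cone_column_subset M0, where y = "\<lambda>z. phase_sum a (x, y, z)" and lam = lam]
    by (simp add: resonance_def)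
qed

lemma sum_resonance_cone_le:
  assumes M0: "0 \<le> M" and N8: "8 \<le> N" and a: "z3norm a \<le> N / 4"
  shows "(\<Sum>n\<in>cone M N. resonance lam a n) \<le> real_of_int (2 * M + 1) ^ 2 * (8 * (1 + ln (real_of_int M + 1)))"
proof -
  have fin: "finite (cone_column M N x y)" for x y
    using cone_column_subset by (rule finite_subset) simp
  have "(\<Sum>n\<in>cone M N. resonance lam a n)
      = (\<Sum>x\<in>{-M..M}. \<Sum>y\<in>{-M..M}. \<Sum>z\<in>cone_column M N x y. resonance lam a (x, y, z))"
    unfolding cone_eq_Sigma by (simp add: sum.Sigma fin)
  also have "\<dots> \<le> (\<Sum>x\<in>{-M..M}. \<Sum>y\<in>{-M..M}. 8 * (1 + ln (real_of_int M + 1)))"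
    by (intro sum_mono sum_resonance_column_le M0 N8 a)
  also have "\<dots> = real_of_int (2 * M + 1) ^ 2 * (8 * (1 + ln (real_of_int M + 1)))"
    using M0 by (simp add: power2_eq_square)
  finally show ?thesis .
qed

text \<open>Every point of the shell is the image of a point of the cone \<open>x\<^sup>2 + y\<^sup>2 \<le> 2 z\<^sup>2, z \<ge> 0\<close>
  under a coordinate reflection or transposition, which preserves the resonance weights.\<close>

definition swap13 :: "z3 \<Rightarrow> z3" where
  "swap13 = (\<lambda>(x, y, z). (z, y, x))"

definition swap23 :: "z3 \<Rightarrow> z3" where
  "swap23 = (\<lambda>(x, y, z). (x, z, y))"

definition coordinate_symmetries :: "(z3 \<Rightarrow> z3) set" where
  "coordinate_symmetries = set [id, z3neg, swap13, swap13 \<circ> z3neg, swap23, swap23 \<circ> z3neg]"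

lemma coordinate_symmetry_automorphism:
  assumes "\<sigma> \<in> coordinate_symmetries"
  shows "z3add (\<sigma> m) (\<sigma> n) = \<sigma> (z3add m n)" and "z3norm (\<sigma> n) = z3norm n" and "jbr (\<sigma> n) = jbr n"
    and "\<sigma> n \<in> cube M \<longleftrightarrow> n \<in> cube M" and "surj \<sigma>"
proof -
  obtain x y z where n: "n = (x, y, z)" by (cases n)
  obtain x' y' z' where m: "m = (x', y', z')" by (cases m)
  show "z3add (\<sigma> m) (\<sigma> n) = \<sigma> (z3add m n)" "z3norm (\<sigma> n) = z3norm n"
    "\<sigma> n \<in> cube M \<longleftrightarrow> n \<in> cube M"
    using assms unfolding coordinate_symmetries_def n m
    by (auto simp: swap13_def swap23_def z3add_eq z3neg_eq z3norm_eq cube_def algebra_simps)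
  then show "jbr (\<sigma> n) = jbr n" by (simp add: jbr_def)
  have "\<sigma> (\<sigma> n) = n" for n
    using assms by (cases n) (auto simp: coordinate_symmetries_def swap13_def swap23_def z3neg_eq)
  then show "surj \<sigma>" by (rule surjI)
qed

lemma resonance_coordinate_symmetry:
  assumes "\<sigma> \<in> coordinate_symmetries"
  shows "resonance lam (\<sigma> b) (\<sigma> m) = resonance lam b m"
  by (simp add: resonance_def phase_sum_def coordinate_symmetry_automorphism[OF assms])

lemma cone_memI:
  assumes "\<sigma> \<in> coordinate_symmetries" and "\<sigma> (x, y, z) \<in> shell M N"
    and "0 \<le> z" and "x\<^sup>2 \<le> z\<^sup>2" and "y\<^sup>2 \<le> z\<^sup>2"
  shows "(x, y, z) \<in> cone M N"
  using assms coordinate_symmetry_automorphism[OF assms(1)] by (auto simp: cone_def shell_def)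

lemma shell_subset_symmetric_cones:
  "shell M N \<subseteq> (\<lambda>(\<sigma>, m). \<sigma> m) ` (coordinate_symmetries \<times> cone M N)"
proof
  fix n assume n: "n \<in> shell M N"
  obtain x y z where n_eq: "n = (x, y, z)" by (cases n)
  have image: "n \<in> (\<lambda>(\<sigma>, m). \<sigma> m) ` (coordinate_symmetries \<times> cone M N)"
    if "\<sigma> \<in> coordinate_symmetries" "\<sigma> (u, v, w) = n" "0 \<le> w" "u\<^sup>2 \<le> w\<^sup>2" "v\<^sup>2 \<le> w\<^sup>2" for \<sigma> u v w
    using that n cone_memI[of \<sigma> u v w M N] by (auto intro!: rev_image_eqI[of "(\<sigma>, (u, v, w))"])
  have sym: "id \<in> coordinate_symmetries" "z3neg \<in> coordinate_symmetries"
    "swap13 \<in> coordinate_symmetries" "swap13 \<circ> z3neg \<in> coordinate_symmetries"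
    "swap23 \<in> coordinate_symmetries" "swap23 \<circ> z3neg \<in> coordinate_symmetries"
    by (simp_all add: coordinate_symmetries_def)
  consider "x\<^sup>2 \<le> z\<^sup>2" "y\<^sup>2 \<le> z\<^sup>2" | "z\<^sup>2 \<le> x\<^sup>2" "y\<^sup>2 \<le> x\<^sup>2" | "x\<^sup>2 \<le> y\<^sup>2" "z\<^sup>2 \<le> y\<^sup>2"
    by linarith
  then show "n \<in> (\<lambda>(\<sigma>, m). \<sigma> m) ` (coordinate_symmetries \<times> cone M N)"
  proof cases
    case 1
    then show ?thesis
      using image[OF sym(1), of x y z] image[OF sym(2), of "-x" "-y" "-z"]
      by (cases "0 \<le> z") (auto simp: n_eq z3neg_eq)
  next
    case 2
    then show ?thesis
      using image[OF sym(3), of z y x] image[OF sym(4), of "-z" "-y" "-x"]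
      by (cases "0 \<le> x") (auto simp: n_eq z3neg_eq swap13_def)
  next
    case 3
    then show ?thesis
      using image[OF sym(5), of x z y] image[OF sym(6), of "-x" "-z" "-y"]
      by (cases "0 \<le> y") (auto simp: n_eq z3neg_eq swap23_def)
  qed
qed

lemma sum_resonance_shell_le:
  assumes M0: "0 \<le> M" and N8: "8 \<le> N" and a: "z3norm a \<le> N / 4"
  shows "(\<Sum>n\<in>shell M N. resonance lam a n)
    \<le> 6 * (real_of_int (2 * M + 1) ^ 2 * (8 * (1 + ln (real_of_int M + 1))))"
proof -
  define B where "B = real_of_int (2 * M + 1) ^ 2 * (8 * (1 + ln (real_of_int M + 1)))"
  have "(\<Sum>n\<in>shell M N. resonance lam a n)
      \<le> (\<Sum>n\<in>(\<lambda>(\<sigma>, m). \<sigma> m) ` (coordinate_symmetries \<times> cone M N). resonance lam a n)"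
    by (intro sum_mono2 shell_subset_symmetric_cones resonance_nonneg)
      (simp add: coordinate_symmetries_def)
  also have "\<dots> \<le> sum (resonance lam a \<circ> (\<lambda>(\<sigma>, m). \<sigma> m)) (coordinate_symmetries \<times> cone M N)"
    by (rule sum_image_le) (auto simp: coordinate_symmetries_def resonance_nonneg)
  also have "\<dots> = (\<Sum>\<sigma>\<in>coordinate_symmetries. \<Sum>m\<in>cone M N. resonance lam a (\<sigma> m))"
    by (simp add: sum.cartesian_product case_prod_beta)
  also have "\<dots> \<le> (\<Sum>\<sigma>\<in>coordinate_symmetries. B)"
  proof (rule sum_mono)
    fix \<sigma> assume \<sigma>: "\<sigma> \<in> coordinate_symmetries"
    obtain b where b: "a = \<sigma> b" using coordinate_symmetry_automorphism(5)[OF \<sigma>] by (metis surjD)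
    have "z3norm b \<le> N / 4" using a unfolding b coordinate_symmetry_automorphism(2)[OF \<sigma>] .
    then show "(\<Sum>m\<in>cone M N. resonance lam a (\<sigma> m)) \<le> B"
      unfolding b resonance_coordinate_symmetry[OF \<sigma>] B_def by (rule sum_resonance_cone_le[OF M0 N8])
  qed
  also have "\<dots> \<le> 6 * B"
  proof -
    have "card coordinate_symmetries \<le> length [id, z3neg, swap13, swap13 \<circ> z3neg, swap23, swap23 \<circ> z3neg]"
      unfolding coordinate_symmetries_def by (rule card_length)
    moreover have "0 \<le> B" using M0 by (simp add: B_def)
    ultimately show ?thesis by (simp add: mult_right_mono)
  qed
  finally show ?thesis unfolding B_def .
qed

lemma one_le_ln_two_plus:
  fixes N :: real
  assumes "1 \<le> N"
  shows "1 \<le> ln (2 + N)"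
proof -
  have "exp 1 \<le> 2 + N" using exp_le assms by linarith
  then show ?thesis using assms by (simp add: ln_ge_iff)
qed

lemma sum_resonance_dyadic_shell_le:
  assumes M: "real_of_int M = 2 * N" and N8: "8 \<le> N" and a: "z3norm a \<le> N / 4"
  shows "(\<Sum>n\<in>shell M N. resonance lam a n) \<le> 3600 * N\<^sup>2 * ln (2 + N)"
proof -
  have M0: "0 \<le> M" using M N8 by linarith
  have ln1: "1 \<le> ln (2 + N)" using N8 by (intro one_le_ln_two_plus) simp
  have "ln (2 * N + 1) \<le> ln (2 * (2 + N))" using N8 by simp
  also have "\<dots> = ln 2 + ln (2 + N)" using N8 by (intro ln_mult_pos) auto
  also have "ln (2::real) \<le> 1" using ln_le_minus_one[of 2] by simp
  finally have "1 + ln (2 * N + 1) \<le> 3 * ln (2 + N)" using ln1 by linarith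
  then have "1 + ln (real_of_int M + 1) \<le> 3 * ln (2 + N)" using M by simp
  moreover have "real_of_int (2 * M + 1) ^ 2 \<le> (5 * N)\<^sup>2"
    using M N8 by (intro power_mono) auto
  then have "real_of_int (2 * M + 1) ^ 2 \<le> 25 * N\<^sup>2" by (simp add: power_mult_distrib)
  ultimately have "6 * (real_of_int (2 * M + 1) ^ 2 * (8 * (1 + ln (real_of_int M + 1))))
      \<le> 6 * (25 * N\<^sup>2 * (8 * (3 * ln (2 + N))))"
    using M0 by (intro mult_left_mono mult_mono) auto
  then show ?thesis using sum_resonance_shell_le[OF M0 N8 a, of lam] by simp
qed

section \<open>The Littlewood-Paley symbol\<close>

lemma chiLP_z3neg [simp]: "chiLP \<rho> k (z3neg n) = chiLP \<rho> k n"
  by (simp add: chiLP_def rhoN_def)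

lemma abs_chiLP_le_1:
  assumes "trunc_profile \<rho>"
  shows "\<bar>chiLP \<rho> k n\<bar> \<le> 1"
proof -
  have "0 \<le> \<rho> r \<and> \<rho> r \<le> 1" for r using assms unfolding trunc_profile_def by blast
  then show ?thesis unfolding chiLP_def rhoN_def by (smt (verit))
qed

lemma chiLP_support:
  assumes tp: "trunc_profile \<rho>" and k: "1 \<le> k" and nz: "chiLP \<rho> k n \<noteq> 0"
  shows "2 ^ k / 2 < z3norm n" and "z3norm n < 2 * 2 ^ k"
proof -
  have one: "\<rho> r = 1" if "0 \<le> r" "r \<le> 1" for r
    using tp that unfolding trunc_profile_def by (metis abs_of_nonneg)
  have zero: "\<rho> r = 0" if "2 \<le> r" for r
    using tp that unfolding trunc_profile_def by (metis abs_ge_self order_trans)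
  obtain j where kj: "k = Suc j" using k by (cases k) auto
  define P where "P = (2::real) ^ j"
  have P0: "0 < P" unfolding P_def by simp
  have chi: "chiLP \<rho> k n = \<rho> (z3norm n / (2 * P)) - \<rho> (z3norm n / P)"
    by (simp add: chiLP_def rhoN_def kj P_def)
  show "2 ^ k / 2 < z3norm n"
  proof (rule ccontr)
    assume "\<not> ?thesis"
    then have "z3norm n \<le> P" by (simp add: kj P_def)
    then have "z3norm n / (2 * P) \<le> 1" "z3norm n / P \<le> 1" using P0 by (simp_all add: divide_le_eq)
    then show False using nz chi one z3norm_nonneg[of n] P0 by simp
  qed
  show "z3norm n < 2 * 2 ^ k"
  proof (rule ccontr)
    assume "\<not> ?thesis"
    then have "4 * P \<le> z3norm n" by (simp add: kj P_def)
    then have "2 \<le> z3norm n / (2 * P)" "2 \<le> z3norm n / P" using P0 by (simp_all add: le_divide_eq)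
    then show False using nz chi zero by simp
  qed
qed

lemma infsum_chiLP_eq_sum_cube:
  assumes "trunc_profile \<rho>" and "1 \<le> k"
  shows "(\<Sum>\<^sub>\<infinity> n. complex_of_real (chiLP \<rho> k n) * X n)
    = (\<Sum>n\<in>cube (2 * 2 ^ k). complex_of_real (chiLP \<rho> k n) * X n)"
proof -
  have "chiLP \<rho> k n = 0" if "n \<notin> cube (2 * 2 ^ k)" for n
  proof (rule ccontr)
    assume "chiLP \<rho> k n \<noteq> 0"
    then have "z3norm n < 2 * 2 ^ k" by (rule chiLP_support(2)[OF assms])
    moreover have "real_of_int (2 * 2 ^ k) < z3norm n" by (rule z3norm_gt_if_notin_cube[OF that])
    ultimately show False by simp
  qed
  then have "(\<Sum>\<^sub>\<infinity> n. complex_of_real (chiLP \<rho> k n) * X n)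
      = (\<Sum>\<^sub>\<infinity> n\<in>cube (2 * 2 ^ k). complex_of_real (chiLP \<rho> k n) * X n)"
    by (intro infsum_cong_neutral) auto
  then show ?thesis by simp
qed

lemma norm_sum_chiLP_le_shell:
  assumes "trunc_profile \<rho>" and "1 \<le> k"
  shows "norm (\<Sum>n\<in>cube (2 * 2 ^ k). complex_of_real (chiLP \<rho> k n) * X n)
    \<le> (\<Sum>n\<in>shell (2 * 2 ^ k) (2 ^ k). norm (X n))"
proof -
  have "norm (\<Sum>n\<in>cube (2 * 2 ^ k). complex_of_real (chiLP \<rho> k n) * X n)
      \<le> (\<Sum>n\<in>cube (2 * 2 ^ k). norm (complex_of_real (chiLP \<rho> k n) * X n))"
    by (rule norm_sum)
  also have "\<dots> = (\<Sum>n\<in>shell (2 * 2 ^ k) (2 ^ k). norm (complex_of_real (chiLP \<rho> k n) * X n))"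
    using chiLP_support(1)[OF assms]
    by (intro sum.mono_neutral_right) (auto simp: shell_def)
  also have "\<dots> \<le> (\<Sum>n\<in>shell (2 * 2 ^ k) (2 ^ k). norm (X n))"
    using abs_chiLP_le_1[OF assms(1)] by (intro sum_mono) (simp add: norm_mult mult_left_le_one_le)
  finally show ?thesis .
qed

lemma sum_cube_chiLP_symmetrize:
  "(\<Sum>n\<in>cube M. complex_of_real (chiLP \<rho> k n) * X n)
    = (\<Sum>n\<in>cube M. complex_of_real (chiLP \<rho> k n) * (X n + X (z3neg n))) / 2"
proof -
  have "z3neg ` cube M = cube M"
  proof
    show "cube M \<subseteq> z3neg ` cube M" by (metis image_eqI subsetI z3neg_z3neg z3neg_in_cube_iff)
  qed auto
  moreover have "inj_on z3neg (cube M)" by (metis inj_onI z3neg_z3neg)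
  ultimately have "(\<Sum>n\<in>cube M. complex_of_real (chiLP \<rho> k n) * X n)
      = (\<Sum>n\<in>cube M. complex_of_real (chiLP \<rho> k n) * X (z3neg n))"
    using sum.reindex[of z3neg "cube M" "\<lambda>n. complex_of_real (chiLP \<rho> k n) * X n"] by simp
  then show ?thesis by (simp add: distrib_left sum.distrib)
qed

text \<open>The fast part \<open>P\<close> is estimated term by term, the slow part \<open>Q\<close> only after pairing \<open>n\<close>
  with \<open>-n\<close>; this is where the symmetry of the symbol enters.\<close>

lemma norm_infsum_chiLP_le:
  fixes P Q :: "z3 \<Rightarrow> complex"
  assumes "trunc_profile \<rho>" and "1 \<le> k"
  shows "norm (\<Sum>\<^sub>\<infinity> n. complex_of_real (chiLP \<rho> k n) * ((P n + Q n) / 2))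
    \<le> (\<Sum>n\<in>shell (2 * 2 ^ k) (2 ^ k). norm (P n)) / 2
      + (\<Sum>n\<in>shell (2 * 2 ^ k) (2 ^ k). norm (Q n + Q (z3neg n))) / 4"
proof -
  let ?S = "\<lambda>X. \<Sum>n\<in>cube (2 * 2 ^ k). complex_of_real (chiLP \<rho> k n) * X n"
  have "(\<lambda>n. complex_of_real (chiLP \<rho> k n) * ((P n + Q n) / 2))
      = (\<lambda>n. complex_of_real (chiLP \<rho> k n) * P n / 2 + complex_of_real (chiLP \<rho> k n) * Q n / 2)"
    by (simp add: fun_eq_iff field_simps)
  then have "(\<Sum>\<^sub>\<infinity> n. complex_of_real (chiLP \<rho> k n) * ((P n + Q n) / 2)) = ?S P / 2 + ?S Q / 2"
    unfolding infsum_chiLP_eq_sum_cube[OF assms] by (simp only: sum.distrib sum_divide_distrib)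
  also have "?S Q = ?S (\<lambda>n. Q n + Q (z3neg n)) / 2" by (rule sum_cube_chiLP_symmetrize)
  finally have "(\<Sum>\<^sub>\<infinity> n. complex_of_real (chiLP \<rho> k n) * ((P n + Q n) / 2))
      = ?S P / 2 + ?S (\<lambda>n. Q n + Q (z3neg n)) / 4" by simp
  then have "norm (\<Sum>\<^sub>\<infinity> n. complex_of_real (chiLP \<rho> k n) * ((P n + Q n) / 2))
      \<le> norm (?S P) / 2 + norm (?S (\<lambda>n. Q n + Q (z3neg n))) / 4"
    using norm_triangle_ineq[of "?S P / 2" "?S (\<lambda>n. Q n + Q (z3neg n)) / 4"] by (simp add: norm_divide)
  also have "\<dots> \<le> (\<Sum>n\<in>shell (2 * 2 ^ k) (2 ^ k). norm (P n)) / 2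
      + (\<Sum>n\<in>shell (2 * 2 ^ k) (2 ^ k). norm (Q n + Q (z3neg n))) / 4"
    by (intro add_mono divide_right_mono norm_sum_chiLP_le_shell assms) auto
  finally show ?thesis .
qed

section \<open>The Duhamel-type integral\<close>

definition amplitude_bounds :: "(real \<Rightarrow> real \<Rightarrow> z3 \<Rightarrow> complex) \<Rightarrow> real \<Rightarrow> real \<Rightarrow> bool" where
  "amplitude_bounds f T A \<longleftrightarrow> (\<forall>t t' n. \<bar>t\<bar> \<le> T \<longrightarrow> \<bar>t'\<bar> \<le> T \<longrightarrow>
     norm (f t t' n) \<le> A * jbr n powr (-3) \<and>
     norm (f t t' n - f t t' (z3neg n)) \<le> A * jbr n powr (-4) \<and>
     (\<exists>D. ((\<lambda>s. f t s n) has_vector_derivative D) (at t' within {-T..T}) \<and>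
          norm D \<le> A * jbr n powr (-4)))"

lemma amplitude_boundsD:
  assumes "amplitude_bounds f T A" and "\<bar>t\<bar> \<le> T" and "s \<in> {-T..T}"
  shows "norm (f t s n) \<le> A / jbr n ^ 3" and "norm (f t s n - f t s (z3neg n)) \<le> A / jbr n ^ 4"
proof -
  have "\<bar>s\<bar> \<le> T" using assms(3) by auto
  then have "norm (f t s n) \<le> A * jbr n powr (-3) \<and> norm (f t s n - f t s (z3neg n)) \<le> A * jbr n powr (-4)"
    using assms(1,2) unfolding amplitude_bounds_def by blast
  then show "norm (f t s n) \<le> A / jbr n ^ 3" "norm (f t s n - f t s (z3neg n)) \<le> A / jbr n ^ 4"
    by (simp_all add: jbr_powr_neg_numeral)
qed

lemma amplitude_bounds_lipschitz:
  assumes H: "amplitude_bounds f T A" and t: "\<bar>t\<bar> \<le> T"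
  shows "(A / jbr n ^ 4)-lipschitz_on {-T..T} (\<lambda>s. f t s n)"
proof -
  have "\<exists>D. ((\<lambda>s. f t s n) has_vector_derivative D) (at s within {-T..T}) \<and> norm D \<le> A * jbr n powr (-4)"
    if "s \<in> {-T..T}" for s
  proof -
    have "\<bar>s\<bar> \<le> T" using that by auto
    then show ?thesis using H t unfolding amplitude_bounds_def by blast
  qed
  then obtain D where D: "\<And>s. s \<in> {-T..T} \<Longrightarrow>
      ((\<lambda>s. f t s n) has_vector_derivative D s) (at s within {-T..T}) \<and> norm (D s) \<le> A / jbr n ^ 4"
    unfolding jbr_powr_neg_numeral by (metis times_divide_eq_right mult_1_right)
  show ?thesis
  proof (rule bounded_derivative_imp_lipschitz)
    show "((\<lambda>s. f t s n) has_derivative (\<lambda>h. h *\<^sub>R D s)) (at s within {-T..T})" if "s \<in> {-T..T}" for s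
      using D[OF that] by (simp add: has_vector_derivative_def)
    show "onorm (\<lambda>h. h *\<^sub>R D s) \<le> A / jbr n ^ 4" if "s \<in> {-T..T}" for s
    proof (rule onorm_le)
      fix h :: real
      have "norm (D s) * \<bar>h\<bar> \<le> A / jbr n ^ 4 * \<bar>h\<bar>" using D[OF that] by (intro mult_right_mono) auto
      then show "norm (h *\<^sub>R D s) \<le> A / jbr n ^ 4 * norm h" by (simp add: mult.commute)
    qed
    have "t \<in> {-T..T}" using t by auto
    then show "0 \<le> A / jbr n ^ 4" using D norm_ge_zero order_trans by blast
  qed simp
qed

definition sine_piece :: "(real \<Rightarrow> real \<Rightarrow> z3 \<Rightarrow> complex) \<Rightarrow> real \<Rightarrow> real \<Rightarrow> real \<Rightarrow> real \<Rightarrow> real \<Rightarrow> z3 \<Rightarrow> complex"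
  where "sine_piece f lam t c d w n =
    integral {c..d} (\<lambda>x. complex_of_real (sin ((t - x) * w)) * cis (lam * x) * f t x n)"

lemma one_div_power_le:
  fixes j N :: real
  assumes "N / 2 < j" and "0 < N"
  shows "1 / j ^ m \<le> 2 ^ m / N ^ m"
proof -
  have "(N / 2) ^ m \<le> j ^ m" using assms by (intro power_mono) auto
  then have "1 / j ^ m \<le> 1 / (N / 2) ^ m" using assms by (intro frac_le) auto
  then show ?thesis by (simp add: power_divide)
qed

lemma fast_part_le:
  assumes H: "amplitude_bounds f T A" and A0: "0 \<le> A" and T1: "1 \<le> T"
    and cd: "0 \<le> c" "c \<le> d" "d \<le> t" "t \<le> T" and n: "N / 2 < z3norm n" and N: "0 < N"
  shows "norm (sine_piece f lam t c d (phase_sum a n) n)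
    \<le> 16 * pi * T * A / N ^ 3 * (resonance lam a n + resonance (- lam) a n)"
proof -
  have t: "\<bar>t\<bar> \<le> T" and sub: "{c..d} \<subseteq> {-T..T}" using cd by auto
  have j: "N / 2 < jbr n" using n z3norm_le_jbr[of n] by linarith
  have "1 / jbr n ^ 4 \<le> 1 / jbr n ^ 3"
    using one_le_jbr[of n] by (intro frac_le) (auto intro: power_increasing)
  moreover have "1 / jbr n ^ 3 \<le> 8 / N ^ 3" using one_div_power_le[OF j N, of 3] by simp
  ultimately have "A * (1 / jbr n ^ 3 + 1 / jbr n ^ 4) \<le> A * (8 / N ^ 3 + 8 / N ^ 3)"
    using A0 by (intro mult_left_mono add_mono) auto
  then have size: "A / jbr n ^ 3 + A / jbr n ^ 4 \<le> 16 * A / N ^ 3" by (simp add: distrib_left mult_ac)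
  have "norm (sine_piece f lam t c d (phase_sum a n) n)
      \<le> pi * T * (A / jbr n ^ 3 + A / jbr n ^ 4)
        * (1 / (1 + \<bar>lam - phase_sum a n\<bar>) + 1 / (1 + \<bar>lam + phase_sum a n\<bar>))"
    unfolding sine_piece_def using cd T1 sub
    by (intro sine_phase_integral_le amplitude_boundsD[OF H t]
        lipschitz_on_subset[OF amplitude_bounds_lipschitz[OF H t]]) auto
  also have "1 / (1 + \<bar>lam - phase_sum a n\<bar>) + 1 / (1 + \<bar>lam + phase_sum a n\<bar>)
      = resonance lam a n + resonance (- lam) a n"
    by (simp add: resonance_def abs_minus_commute add.commute)
  also have "pi * T * (A / jbr n ^ 3 + A / jbr n ^ 4) * (resonance lam a n + resonance (- lam) a n)
      \<le> pi * T * (16 * A / N ^ 3) * (resonance lam a n + resonance (- lam) a n)"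
    using size T1 by (intro mult_right_mono mult_left_mono add_nonneg_nonneg resonance_nonneg) auto
  finally show ?thesis by (simp add: mult_ac)
qed

lemma slow_part_pair_le:
  assumes H: "amplitude_bounds f T A" and A1: "1 \<le> A" and T1: "1 \<le> T"
    and cd: "0 \<le> c" "c \<le> d" "d \<le> t" "t \<le> T" and n: "N / 2 < z3norm n" and N: "0 < N"
    and a: "z3norm a \<le> C * A"
  shows "norm (sine_piece f lam t c d (jbr (z3add a n) - jbr n) n
      + sine_piece f lam t c d (jbr (z3add a (z3neg n)) - jbr (z3neg n)) (z3neg n))
    \<le> 16 * (1 + C\<^sup>2) * T\<^sup>2 * A ^ 3 / N ^ 4"
proof -
  have t: "\<bar>t\<bar> \<le> T" and sub: "{c..d} \<subseteq> {-T..T}" using cd by auto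
  define j where "j = jbr n"
  have j: "N / 2 < j" and j1: "1 \<le> j" unfolding j_def using n z3norm_le_jbr[of n] one_le_jbr[of n] by auto
  have cont: "continuous_on {c..d} (\<lambda>x. f t x m)" for m
    by (rule lipschitz_on_continuous_on[OF lipschitz_on_subset[OF amplitude_bounds_lipschitz[OF H t] sub]])
  have "z3norm a ^ 2 / j \<le> (C * A)\<^sup>2 / j"
    using a z3norm_nonneg[of a] j1 by (intro divide_right_mono power_mono) auto
  then have W: "\<bar>(jbr (z3add a n) - jbr n) + (jbr (z3add a (z3neg n)) - jbr (z3neg n))\<bar> \<le> (C * A)\<^sup>2 / j"
    using abs_jbr_second_difference_le[of a n] unfolding j_def by linarith
  have "norm (sine_piece f lam t c d (jbr (z3add a n) - jbr n) n
      + sine_piece f lam t c d (jbr (z3add a (z3neg n)) - jbr (z3neg n)) (z3neg n))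
    \<le> T * (A / j ^ 4 + T * ((C * A)\<^sup>2 / j) * (A / j ^ 3))"
    unfolding sine_piece_def
  proof (rule sine_phase_pair_integral_le)
    show "c \<le> d" "d - c \<le> T" using cd by auto
    show "continuous_on {c..d} (\<lambda>x. f t x n)" "continuous_on {c..d} (\<lambda>x. f t x (z3neg n))"
      by (rule cont)+
    show "norm (f t x n - f t x (z3neg n)) \<le> A / j ^ 4" if "x \<in> {c..d}" for x
      using amplitude_boundsD(2)[OF H t] that sub unfolding j_def by blast
    show "norm (f t x (z3neg n)) \<le> A / j ^ 3" if "x \<in> {c..d}" for x
      using amplitude_boundsD(1)[OF H t, of x "z3neg n"] that sub unfolding j_def by auto
    show "\<bar>t - x\<bar> \<le> T" if "x \<in> {c..d}" for x using that cd by auto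
  qed (rule W)
  also have "\<dots> = (T * A + T\<^sup>2 * C\<^sup>2 * A ^ 3) * (1 / j ^ 4)"
    using j1 by (simp add: field_simps power2_eq_square power3_eq_cube power4_eq_xxxx)
  also have "\<dots> \<le> ((1 + C\<^sup>2) * T\<^sup>2 * A ^ 3) * (16 / N ^ 4)"
  proof (rule mult_mono)
    have "T * A \<le> T\<^sup>2 * A ^ 3"
      using mult_mono[OF power_increasing[of 1 2 T] power_increasing[of 1 3 A]] T1 A1 by simp
    then show "T * A + T\<^sup>2 * C\<^sup>2 * A ^ 3 \<le> (1 + C\<^sup>2) * T\<^sup>2 * A ^ 3" by (simp add: algebra_simps)
    show "1 / j ^ 4 \<le> 16 / N ^ 4" using one_div_power_le[OF j N, of 4] by simp
  qed (use A1 j1 in auto)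
  also have "\<dots> = 16 * (1 + C\<^sup>2) * T\<^sup>2 * A ^ 3 / N ^ 4" by simp
  finally show ?thesis .
qed

lemma sum_fast_parts_le:
  assumes H: "amplitude_bounds f T A" and A1: "1 \<le> A" and T1: "1 \<le> T"
    and cd: "0 \<le> c" "c \<le> d" "d \<le> t" "t \<le> T"
    and M: "real_of_int M = 2 * N" and N8: "8 \<le> N" and a: "z3norm a \<le> N / 4"
  shows "(\<Sum>n\<in>shell M N. norm (sine_piece f lam t c d (phase_sum a n) n))
    \<le> 460800 * (T\<^sup>2 * A ^ 3 * ln (2 + N) / N)"
proof -
  have ln1: "1 \<le> ln (2 + N)" using N8 by (intro one_le_ln_two_plus) simp
  have "(\<Sum>n\<in>shell M N. norm (sine_piece f lam t c d (phase_sum a n) n))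
      \<le> (\<Sum>n\<in>shell M N. 16 * pi * T * A / N ^ 3 * (resonance lam a n + resonance (- lam) a n))"
    using N8 A1 by (intro sum_mono fast_part_le[OF H _ T1 cd]) (auto simp: shell_def)
  also have "\<dots> = 16 * pi * T * A / N ^ 3
      * ((\<Sum>n\<in>shell M N. resonance lam a n) + (\<Sum>n\<in>shell M N. resonance (- lam) a n))"
    by (simp only: sum.distrib[symmetric] sum_distrib_left)
  also have "\<dots> \<le> 16 * pi * T * A / N ^ 3 * (3600 * N\<^sup>2 * ln (2 + N) + 3600 * N\<^sup>2 * ln (2 + N))"
    using T1 A1 N8 by (intro mult_left_mono add_mono sum_resonance_dyadic_shell_le[OF M N8 a]) auto
  also have "\<dots> = 115200 * (pi * (T * A * ln (2 + N) / N))"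
    using N8 by (simp add: field_simps power2_eq_square power3_eq_cube)
  also have "\<dots> \<le> 115200 * (4 * (T\<^sup>2 * A ^ 3 * ln (2 + N) / N))"
  proof -
    have "T * A \<le> T\<^sup>2 * A ^ 3"
      using mult_mono[OF power_increasing[of 1 2 T] power_increasing[of 1 3 A]] T1 A1 by simp
    then have "T * A * ln (2 + N) / N \<le> T\<^sup>2 * A ^ 3 * ln (2 + N) / N"
      using ln1 N8 by (intro divide_right_mono mult_right_mono) auto
    then show ?thesis using pi_less_4 ln1 N8 T1 A1 by (intro mult_left_mono mult_mono) auto
  qed
  finally show ?thesis by simp
qed

lemma sum_slow_parts_le:
  assumes H: "amplitude_bounds f T A" and A1: "1 \<le> A" and T1: "1 \<le> T"
    and cd: "0 \<le> c" "c \<le> d" "d \<le> t" "t \<le> T"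
    and M: "real_of_int M = 2 * N" and N8: "8 \<le> N" and a: "z3norm a \<le> C * A"
  shows "(\<Sum>n\<in>shell M N. norm (sine_piece f lam t c d (jbr (z3add a n) - jbr n) n
      + sine_piece f lam t c d (jbr (z3add a (z3neg n)) - jbr (z3neg n)) (z3neg n)))
    \<le> 2000 * (1 + C\<^sup>2) * (T\<^sup>2 * A ^ 3 * ln (2 + N) / N)"
proof -
  have "(\<Sum>n\<in>shell M N. norm (sine_piece f lam t c d (jbr (z3add a n) - jbr n) n
      + sine_piece f lam t c d (jbr (z3add a (z3neg n)) - jbr (z3neg n)) (z3neg n)))
    \<le> (\<Sum>n\<in>shell M N. 16 * (1 + C\<^sup>2) * T\<^sup>2 * A ^ 3 / N ^ 4)"
    using N8 by (intro sum_mono slow_part_pair_le[OF H A1 T1 cd _ _ a]) (auto simp: shell_def)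
  also have "\<dots> = real (card (shell M N)) * (16 * (1 + C\<^sup>2) * T\<^sup>2 * A ^ 3 / N ^ 4)" by simp
  also have "\<dots> \<le> (5 * N) ^ 3 * (16 * (1 + C\<^sup>2) * T\<^sup>2 * A ^ 3 / N ^ 4)"
  proof (rule mult_right_mono)
    have M0: "0 \<le> M" using M N8 by linarith
    have "card (shell M N) \<le> card (cube M)" by (rule card_mono) (auto simp: shell_def)
    then have "real (card (shell M N)) \<le> real (nat (2 * M + 1) ^ 3)" by (simp add: card_cube[OF M0])
    also have "\<dots> = (4 * N + 1) ^ 3" using M M0 by simp
    also have "\<dots> \<le> (5 * N) ^ 3" using N8 by (intro power_mono) auto
    finally show "real (card (shell M N)) \<le> (5 * N) ^ 3" .
  qed (use A1 N8 in simp)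
  also have "\<dots> = 2000 * (1 + C\<^sup>2) * (T\<^sup>2 * A ^ 3 * 1 / N)"
    using N8 by (simp add: field_simps power2_eq_square power3_eq_cube power4_eq_xxxx)
  also have "\<dots> \<le> 2000 * (1 + C\<^sup>2) * (T\<^sup>2 * A ^ 3 * ln (2 + N) / N)"
    using one_le_ln_two_plus[of N] N8 T1 A1
    by (intro mult_left_mono divide_right_mono) (auto intro: add_nonneg_nonneg)
  finally show ?thesis .
qed

lemma duhamel_integral_split:
  assumes J: "is_interval J" and H: "amplitude_bounds f T A" and t0: "0 \<le> t" and tT: "t \<le> T"
  obtains c d where "0 \<le> c" "c \<le> d" "d \<le> t"
    "\<And>n. interval_lebesgue_integral lborel (ereal 0) (ereal t)
        (\<lambda>t'. complex_of_real (indicator J t' * sin ((t - t') * jbr (z3add a n)) * cos ((t - t') * jbr n))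
          * cis (lam * t') * f t t' n)
      = (sine_piece f lam t c d (phase_sum a n) n + sine_piece f lam t c d (jbr (z3add a n) - jbr n) n) / 2"
proof -
  obtain c d where cd: "0 \<le> c" "c \<le> d" "d \<le> t" and reduce: "\<And>\<psi> :: real \<Rightarrow> complex.
      continuous_on {0..t} \<psi> \<Longrightarrow>
      (LBINT x=ereal 0..ereal t. complex_of_real (indicator J x) * \<psi> x) = integral {c..d} \<psi>"
    using interval_integral_indicator_eq_integral[OF J t0] by metis
  have "\<bar>t\<bar> \<le> T" using t0 tT by simp
  then have cont: "continuous_on {0..t} (\<lambda>x. f t x n)" for n
    using tT by (intro continuous_on_subset[OF lipschitz_on_continuous_on[OF amplitude_bounds_lipschitz[OF H]]]) auto
  have "interval_lebesgue_integral lborel (ereal 0) (ereal t)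
      (\<lambda>t'. complex_of_real (indicator J t' * sin ((t - t') * jbr (z3add a n)) * cos ((t - t') * jbr n))
        * cis (lam * t') * f t t' n)
    = integral {c..d} (\<lambda>x. complex_of_real (sin ((t - x) * jbr (z3add a n)) * cos ((t - x) * jbr n))
        * cis (lam * x) * f t x n)" for n
    using reduce[of "\<lambda>x. complex_of_real (sin ((t - x) * jbr (z3add a n)) * cos ((t - x) * jbr n))
        * cis (lam * x) * f t x n"] cont[of n]
    by (simp add: mult.assoc continuous_intros)
  also have "\<dots> n = (sine_piece f lam t c d (phase_sum a n) n
      + sine_piece f lam t c d (jbr (z3add a n) - jbr n) n) / 2" for n
    unfolding sine_piece_def phase_sum_def using cd
    by (intro integral_sin_mult_cos continuous_on_subset[OF cont]) auto
  finally show ?thesis using cd by (intro that) auto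
qed

lemma duhamel_littlewood_paley_bound:
  fixes f :: "real \<Rightarrow> real \<Rightarrow> z3 \<Rightarrow> complex" and a :: z3 and k :: nat
  assumes tp: "trunc_profile \<rho>" and C: "0 < C" and T1: "1 \<le> T" and J: "is_interval J"
    and JT: "J \<subseteq> {0..T}" and A1: "1 \<le> A" and aC: "z3norm a \<le> C * A"
    and kN: "(2::real) ^ k \<ge> max 8 (4 * C) * A" and H: "amplitude_bounds f T A" and t: "\<bar>t\<bar> \<le> T"
  shows "norm (\<Sum>\<^sub>\<infinity> n. complex_of_real (chiLP \<rho> k n) *
           interval_lebesgue_integral lborel (ereal 0) (ereal t)
             (\<lambda>t'. complex_of_real (indicator J t' *
                      sin ((t - t') * jbr (z3add a n)) * cos ((t - t') * jbr n)) *
                   cis (lam * t') * f t t' n))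
        \<le> (240000 + 500 * (1 + C\<^sup>2)) * T ^ 2 * A ^ 3 * ln (2 + 2 ^ k) / 2 ^ k"
    (is "norm (\<Sum>\<^sub>\<infinity> n. _ * ?I n) \<le> _")
proof (cases "t < 0")
  case True
  have "?I n = 0" for n
    using JT True by (intro interval_integral_zero_if_neg) (auto simp: indicator_def)
  then show ?thesis using T1 A1 by simp
next
  case False
  define N where "N = (2::real) ^ k"
  define X where "X = T\<^sup>2 * A ^ 3 * ln (2 + N) / N"
  have "8 * 1 \<le> max 8 (4 * C) * A" using A1 by (intro mult_mono) auto
  then have N8: "8 \<le> N" using kN by (simp add: N_def)
  have "4 * (C * A) \<le> max 8 (4 * C) * A" using A1 C by (simp add: mult.assoc[symmetric] mult_right_mono)
  then have a: "z3norm a \<le> N / 4" using kN aC by (simp add: N_def)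
  have k1: "1 \<le> k" using N8 by (cases k) (auto simp: N_def)
  have M: "real_of_int (2 * 2 ^ k) = 2 * N" by (simp add: N_def)
  have t0: "0 \<le> t" and tT: "t \<le> T" using False t by auto
  obtain c d where cd: "0 \<le> c" "c \<le> d" "d \<le> t" and pieces: "\<And>n.
      ?I n = (sine_piece f lam t c d (phase_sum a n) n + sine_piece f lam t c d (jbr (z3add a n) - jbr n) n) / 2"
    using duhamel_integral_split[OF J H t0 tT, where a = a and lam = lam] by blast
  have "norm (\<Sum>\<^sub>\<infinity> n. complex_of_real (chiLP \<rho> k n) * ?I n)
      \<le> (\<Sum>n\<in>shell (2 * 2 ^ k) N. norm (sine_piece f lam t c d (phase_sum a n) n)) / 2
        + (\<Sum>n\<in>shell (2 * 2 ^ k) N. norm (sine_piece f lam t c d (jbr (z3add a n) - jbr n) n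
            + sine_piece f lam t c d (jbr (z3add a (z3neg n)) - jbr (z3neg n)) (z3neg n))) / 4"
    unfolding pieces N_def by (rule norm_infsum_chiLP_le[OF tp k1])
  also have "\<dots> \<le> 460800 * X / 2 + 2000 * (1 + C\<^sup>2) * X / 4"
    unfolding X_def
    by (intro add_mono divide_right_mono sum_fast_parts_le[OF H A1 T1 cd tT M N8 a]
        sum_slow_parts_le[OF H A1 T1 cd tT M N8 aC]) auto
  also have "\<dots> \<le> (240000 + 500 * (1 + C\<^sup>2)) * X"
  proof -
    have "0 \<le> X" unfolding X_def using one_le_ln_two_plus[of N] N8 T1 A1 by simp
    then show ?thesis by (simp add: algebra_simps)
  qed
  also have "\<dots> = (240000 + 500 * (1 + C\<^sup>2)) * T ^ 2 * A ^ 3 * ln (2 + 2 ^ k) / 2 ^ k"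
    by (simp add: X_def N_def)
  finally show ?thesis .
qed

theorem lemma4p14:
  fixes \<rho> :: "real \<Rightarrow> real"
  assumes "trunc_profile \<rho>"
  shows "\<forall>C>0. \<exists>C'>0. \<exists>K>0. \<forall>(f :: real \<Rightarrow> real \<Rightarrow> z3 \<Rightarrow> complex) (a :: z3) (T :: real)
            (J :: real set) (A :: real) (k :: nat).
     1 \<le> T \<longrightarrow> is_interval J \<longrightarrow> J \<subseteq> {0..T} \<longrightarrow> 1 \<le> A \<longrightarrow>
     z3norm a \<le> C * A \<longrightarrow> (2::real) ^ k \<ge> C' * A \<longrightarrow>
     (\<forall>t t' n. \<bar>t\<bar> \<le> T \<longrightarrow> \<bar>t'\<bar> \<le> T \<longrightarrow>
        norm (f t t' n) \<le> A * jbr n powr (-3) \<and>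
        norm (f t t' n - f t t' (z3neg n)) \<le> A * jbr n powr (-4) \<and>
        (\<exists>D. ((\<lambda>s. f t s n) has_vector_derivative D) (at t' within {-T..T}) \<and>
             norm D \<le> A * jbr n powr (-4))) \<longrightarrow>
     (\<forall>(lam::real) t. \<bar>t\<bar> \<le> T \<longrightarrow>
        norm (\<Sum>\<^sub>\<infinity> n. complex_of_real (chiLP \<rho> k n) *
           interval_lebesgue_integral lborel (ereal 0) (ereal t)
             (\<lambda>t'. complex_of_real (indicator J t' *
                      sin ((t - t') * jbr (z3add a n)) * cos ((t - t') * jbr n)) *
                   cis (lam * t') * f t t' n))
        \<le> K * T ^ 2 * A ^ 3 * ln (2 + 2 ^ k) / 2 ^ k)"
  unfolding amplitude_bounds_def[symmetric]
  apply (intro allI impI)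
  subgoal for C
    by (intro exI[of _ "max 8 (4 * C)"] exI[of _ "240000 + 500 * (1 + C\<^sup>2)"] conjI allI impI
        duhamel_littlewood_paley_bound[OF assms]) (simp_all add: add_pos_nonneg)
  done

end
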